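(* Let $k\ge1$ be odd, $\omega=i\sqrt2$, $\Gamma_2=\mathbf{PSL}(2,\mathbb{Z}[\sqrt{-2}])$, $S=\begin{psmallmatrix}0&-1\\1&0\end{psmallmatrix}$, $T=\begin{psmallmatrix}1&1\\0&1\end{psmallmatrix}$, $T_\omega=\begin{psmallmatrix}1&\omega\\0&1\end{psmallmatrix}$, $U=TS$. Let $C_p(\Gamma_2,V_{k,k})$ be the space of maps $f:\Gamma_2\to V_{k,k}$ with $f(\gamma_1\gamma_2)=f(\gamma_1)|\gamma_2+f(\gamma_2)$ for all $\gamma_1,\gamma_2$ and $f(T)=f(T_\omega)=0$, and $$W_{k,k}=\ker(\mathbf{1}+S)\cap\ker(\mathbf{1}+U+U^2)\cap\ker(\mathbf{1}+ST_\omega+T_\omega S+T_\omega^{-1}ST_\omega S).$$ Then $f\mapsto f(S)$ is a $\mathbb{C}$-linear isomorphism $C_p(\Gamma_2,V_{k,k})\to W_{k,k}$.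
   Context: $V_{k,k}$: polynomials $\sum_{0\le i,j\le k}c_{ij}z^i\bar z^j$ over $\mathbb{C}$ with right action $(P|\gamma)(z,\bar z)=(cz+e)^k\overline{(cz+e)}^kP\!\left(\frac{az+b}{cz+e},\frac{\bar a\bar z+\bar b}{\bar c\bar z+\bar e}\right)$ for $\gamma=\begin{psmallmatrix}a&b\\c&e\end{psmallmatrix}$, extended linearly to the group ring; $\ker(X)=\{P:P|X=0\}$. *)

theory Defs
  imports Complex_Main "HOL-Computational_Algebra.Polynomial"
begin

text \<open>2x2 complex matrices (a,b,c,e) standing for the matrix with rows (a b) and (c e).\<close>
type_synonym mat2 = "complex \<times> complex \<times> complex \<times> complex"

fun mmul :: "mat2 \<Rightarrow> mat2 \<Rightarrow> mat2" where
  "mmul (a, b, c, e) (a', b', c', e') =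
     (a * a' + b * c', a * b' + b * e', c * a' + e * c', c * b' + e * e')"

fun mneg :: "mat2 \<Rightarrow> mat2" where
  "mneg (a, b, c, e) = (- a, - b, - c, - e)"

fun mdet :: "mat2 \<Rightarrow> complex" where
  "mdet (a, b, c, e) = a * e - b * c"

definition omega :: complex where
  "omega = \<i> * complex_of_real (sqrt 2)"

definition in_O :: "complex \<Rightarrow> bool" where
  "in_O z \<longleftrightarrow> (\<exists>m n :: int. z = of_int m + of_int n * omega)"

definition SL2O :: "mat2 set" where
  "SL2O = {(a, b, c, e). in_O a \<and> in_O b \<and> in_O c \<and> in_O e \<and> a * e - b * c = 1}"

text \<open>Elements of PSL(2, Z[sqrt(-2)]) are the classes {M, -M}.\<close>
definition pcl :: "mat2 \<Rightarrow> mat2 set" where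
  "pcl M = {M, mneg M}"

definition Gamma2 :: "mat2 set set" where
  "Gamma2 = pcl ` SL2O"

definition pmul :: "mat2 set \<Rightarrow> mat2 set \<Rightarrow> mat2 set" where
  "pmul X Y = (\<lambda>(M, N). mmul M N) ` (X \<times> Y)"

definition rep :: "mat2 set \<Rightarrow> mat2" where
  "rep X = (SOME M. M \<in> X)"

definition matS :: mat2 where "matS = (0, -1, 1, 0)"
definition matT :: mat2 where "matT = (1, 1, 0, 1)"
definition matTw :: mat2 where "matTw = (1, omega, 0, 1)"
definition matTwinv :: mat2 where "matTwinv = (1, - omega, 0, 1)"
definition matU :: mat2 where "matU = mmul matT matS"

text \<open>Polynomials in z and zbar: an element of type complex poly poly; the outer
  variable is zbar, the inner one (coefficients) is z. So the coefficient of
  z^i zbar^j in P is coeff (coeff P j) i.\<close>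
definition Vkk :: "nat \<Rightarrow> complex poly poly set" where
  "Vkk k = {P. degree P \<le> k \<and> (\<forall>j. degree (coeff P j) \<le> k)}"

text \<open>The slash action, computed formally:
  (cz+e)^k conj(cz+e)^k (z^i zbar^j)[z := (az+b)/(cz+e)] =
  (az+b)^i (cz+e)^(k-i) (conj a zbar + conj b)^j (conj c zbar + conj e)^(k-j).\<close>
definition slash :: "nat \<Rightarrow> complex poly poly \<Rightarrow> mat2 \<Rightarrow> complex poly poly" where
  "slash k P M = (case M of (a, b, c, e) \<Rightarrow>
     (\<Sum>i\<le>k. \<Sum>j\<le>k. [:[:coeff (coeff P j) i:]:]
        * [:[:b, a:]:] ^ i * [:[:e, c:]:] ^ (k - i)
        * [:[:cnj b:], [:cnj a:]:] ^ j * [:[:cnj e:], [:cnj c:]:] ^ (k - j)))"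

definition pslash :: "nat \<Rightarrow> complex poly poly \<Rightarrow> mat2 set \<Rightarrow> complex poly poly" where
  "pslash k P X = slash k P (rep X)"

text \<open>Parabolic cocycles C_p(Gamma_2, V_{k,k}) (functions extended by 0 off Gamma_2).\<close>
definition Cp :: "nat \<Rightarrow> (mat2 set \<Rightarrow> complex poly poly) set" where
  "Cp k = {f. (\<forall>X\<in>Gamma2. f X \<in> Vkk k) \<and> (\<forall>X. X \<notin> Gamma2 \<longrightarrow> f X = 0)
            \<and> (\<forall>X\<in>Gamma2. \<forall>Y\<in>Gamma2. f (pmul X Y) = pslash k (f X) Y + f Y)
            \<and> f (pcl matT) = 0 \<and> f (pcl matTw) = 0}"

definition Wkk :: "nat \<Rightarrow> complex poly poly set" where
  "Wkk k = {P \<in> Vkk k.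
     P + slash k P matS = 0 \<and>
     P + slash k P matU + slash k P (mmul matU matU) = 0 \<and>
     P + slash k P (mmul matS matTw) + slash k P (mmul matTw matS)
       + slash k P (mmul (mmul (mmul matTwinv matS) matTw) matS) = 0}"

end

theory Submission
  imports Defs
begin

text \<open>
  A cocycle \<open>f\<close> vanishing on \<open>T\<close> and \<open>T\<^sub>\<omega>\<close> vanishes on all translations, so, since \<open>S\<close> and the
  translations generate \<open>SL\<^sub>2(\<int>[\<surd>-2])\<close> (the ring is Euclidean), \<open>f\<close> is determined by
  \<open>P = f(S)\<close>; the torsion relations \<open>S\<^sup>2 = (TS)\<^sup>3 = (T\<^sub>\<omega>\<^sup>-\<^sup>1 S T\<^sub>\<omega> S)\<^sup>2 = -1\<close> put \<open>P\<close> into \<open>W\<^sub>k\<^sub>,\<^sub>k\<close>.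

  Conversely, for \<open>P \<in> W\<^sub>k\<^sub>,\<^sub>k\<close> the value \<open>f(g)\<close> depends only on the bottom row \<open>v\<close> of \<open>g\<close>. Two
  rows \<open>v, w\<close> with \<open>det(w, v) = \<plusminus>1\<close> span an edge carrying the modular symbol \<open>P | g\<^sub>v\<^sub>w\<close>, and
  \<open>f(g)\<close> is defined as the sum of these symbols along a Euclidean descent from \<open>v\<close> to \<open>(0, \<plusminus>1)\<close>.
  The three relations of \<open>W\<^sub>k\<^sub>,\<^sub>k\<close> say that the symbols are antisymmetric and sum to zero
  around the triangles \<open>v, w, w \<plusminus> v\<close> and the quadrangles \<open>v, w, \<omega>w \<mp> v, w \<plusminus> \<omega>v\<close>. Independence of
  the chosen descent follows by induction on the norm of the first entry: the geometry of the
  lattice \<open>\<int>[\<surd>-2] \<subseteq> \<complex>\<close> (every point of the unit circle is within distance \<open>1\<close> of one of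
  \<open>\<plusminus>1, \<plusminus>\<omega>\<close>, and the British flag identity) always provides such a triangle or quadrangle
  whose other vertices are shorter.
\<close>

section \<open>The Euclidean ring \<open>\<int>[\<surd>-2]\<close>\<close>

lemma omega_squared [simp]: "omega * omega = -2"
proof -
  have "omega * omega = (\<i> * \<i>) * complex_of_real (sqrt 2 * sqrt 2)"
    unfolding omega_def by (simp only: of_real_mult mult_ac)
  then show ?thesis by simp
qed

lemma omega_squared_left [simp]: "omega * (omega * x) = -2 * x"
  by (simp flip: mult.assoc)

lemma Re_omega [simp]: "Re omega = 0" and Im_omega [simp]: "Im omega = sqrt 2"
  by (simp_all add: omega_def)

lemma in_O_of_int [simp]: "in_O (of_int m)"
  unfolding in_O_def by (rule exI[of _ m], rule exI[of _ 0]) simp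

lemma in_O_0 [simp]: "in_O 0" and in_O_1 [simp]: "in_O 1"
  using in_O_of_int[of 0] in_O_of_int[of 1] by simp_all

lemma in_O_omega [simp]: "in_O omega"
  unfolding in_O_def by (rule exI[of _ 0], rule exI[of _ 1]) simp

lemma in_O_add:
  assumes "in_O a" "in_O b" shows "in_O (a + b)"
proof -
  obtain m n m' n' where "a = of_int m + of_int n * omega" "b = of_int m' + of_int n' * omega"
    using assms by (auto simp: in_O_def)
  then have "a + b = of_int (m + m') + of_int (n + n') * omega"
    by (simp add: algebra_simps)
  then show ?thesis unfolding in_O_def by blast
qed

lemma in_O_mult:
  assumes "in_O a" "in_O b" shows "in_O (a * b)"
proof -
  obtain m n m' n' where "a = of_int m + of_int n * omega" "b = of_int m' + of_int n' * omega"
    using assms by (auto simp: in_O_def)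
  then have "a * b = of_int (m * m' - 2 * n * n') + of_int (m * n' + n * m') * omega"
    by (simp add: algebra_simps)
  then show ?thesis unfolding in_O_def by blast
qed

lemma in_O_uminus_iff [simp]: "in_O (- a) \<longleftrightarrow> in_O a"
proof -
  have "in_O (- a)" if "in_O a" for a
    using in_O_mult[OF in_O_of_int[of "-1"] that] by simp
  then show ?thesis by (metis minus_minus)
qed

lemma in_O_diff: "in_O a \<Longrightarrow> in_O b \<Longrightarrow> in_O (a - b)"
  using in_O_add[of a "- b"] by simp

abbreviation is_sign :: "complex \<Rightarrow> bool" where
  "is_sign d \<equiv> d = 1 \<or> d = -1"

lemma in_O_sign: "is_sign e \<Longrightarrow> in_O e"
  by auto

lemma in_O_cmod_square:
  assumes "in_O z"
  obtains m n :: int where "z = of_int m + of_int n * omega" "(cmod z)^2 = of_int (m^2 + 2 * n^2)"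
proof -
  obtain m n :: int where z: "z = of_int m + of_int n * omega"
    using assms by (auto simp: in_O_def)
  then have "(cmod z)^2 = of_int (m^2 + 2 * n^2)"
    by (simp add: cmod_power2 power_mult_distrib)
  with z show ?thesis by (rule that)
qed

definition normO :: "complex \<Rightarrow> nat" where
  "normO z = nat \<lfloor>(cmod z)^2\<rfloor>"

lemma of_nat_normO: "in_O z \<Longrightarrow> real (normO z) = (cmod z)^2"
  by (elim in_O_cmod_square) (simp add: normO_def)

lemma normO_less_iff:
  assumes "in_O a" "in_O b" shows "normO a < normO b \<longleftrightarrow> cmod a < cmod b"
proof -
  have "normO a < normO b \<longleftrightarrow> real (normO a) < real (normO b)"
    by (rule of_nat_less_iff[symmetric])
  also have "\<dots> \<longleftrightarrow> (cmod a)^2 < (cmod b)^2"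
    using assms by (simp add: of_nat_normO)
  also have "\<dots> \<longleftrightarrow> cmod a < cmod b"
    using power_mono_iff[of "cmod b" "cmod a" 2] by (simp add: not_le[symmetric])
  finally show ?thesis .
qed

lemma normO_eq_iff:
  assumes "in_O a" "in_O b" shows "normO a = normO b \<longleftrightarrow> cmod a = cmod b"
proof -
  have "normO a = normO b \<longleftrightarrow> real (normO a) = real (normO b)"
    by (rule of_nat_eq_iff[symmetric])
  also have "\<dots> \<longleftrightarrow> cmod a = cmod b"
    using assms by (simp add: of_nat_normO power2_eq_iff_nonneg)
  finally show ?thesis .
qed

lemma normO_eq_0_iff: "in_O z \<Longrightarrow> normO z = 0 \<longleftrightarrow> z = 0"
  using of_nat_normO[of z] by (metis of_nat_eq_0_iff norm_eq_zero zero_eq_power2)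

lemma in_O_division:
  assumes "in_O a" "in_O c" "c \<noteq> 0"
  obtains l where "in_O l" "cmod (a + l * c) < cmod c"
proof -
  define z where "z = - a / c"
  define l where "l = of_int (round (Re z)) + of_int (round (Im z / sqrt 2)) * omega"
  have "\<bar>Re (l - z)\<bar> \<le> 1/2"
    using of_int_round_abs_le[of "Re z"] by (simp add: l_def)
  then have re: "(Re (l - z))^2 \<le> 1/4"
    using power_mono[of "\<bar>Re (l - z)\<bar>" "1/2" 2] by (simp add: power_divide)
  have "Im (l - z) = sqrt 2 * (of_int (round (Im z / sqrt 2)) - Im z / sqrt 2)"
    by (simp add: l_def algebra_simps)
  then have "\<bar>Im (l - z)\<bar> \<le> sqrt 2 / 2"
    using of_int_round_abs_le[of "Im z / sqrt 2"] by (simp add: abs_mult)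
  then have im: "(Im (l - z))^2 \<le> 1/2"
    using power_mono[of "\<bar>Im (l - z)\<bar>" "sqrt 2 / 2" 2] by (simp add: power_divide)
  have "(cmod (l - z))^2 < 1"
    using re im by (simp add: cmod_power2)
  then have "cmod (l - z) < 1"
    by (simp add: abs_square_less_1)
  moreover have "a + l * c = c * (l - z)"
    using assms(3) by (simp add: z_def field_simps)
  ultimately have "cmod (a + l * c) < cmod c"
    using assms(3) by (simp add: norm_mult)
  moreover have "in_O l"
    unfolding l_def by (intro in_O_add in_O_mult) simp_all
  ultimately show ?thesis by (rule that[rotated])
qed

lemma in_O_unit:
  assumes "in_O a" "in_O e" "a * e = 1"
  shows "a = 1 \<or> a = -1"
proof -
  obtain m n :: int where a: "a = of_int m + of_int n * omega"
    and na: "(cmod a)^2 = of_int (m^2 + 2 * n^2)"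
    using assms(1) by (rule in_O_cmod_square)
  obtain m' n' :: int where ne: "(cmod e)^2 = of_int (m'^2 + 2 * n'^2)"
    using assms(2) by (rule in_O_cmod_square)
  have "(cmod a)^2 * (cmod e)^2 = 1"
    using arg_cong[OF assms(3), of "\<lambda>x. (cmod x)^2"] by (simp add: norm_mult power_mult_distrib)
  then have "real_of_int ((m^2 + 2 * n^2) * (m'^2 + 2 * n'^2)) = 1"
    unfolding na ne by simp
  then have "(m^2 + 2 * n^2) * (m'^2 + 2 * n'^2) = 1"
    by (simp only: of_int_eq_1_iff)
  then have mn: "m^2 + 2 * n^2 = 1"
    using zmult_eq_1_iff[of "m^2 + 2 * n^2"] by (smt (verit) zero_le_power2)
  then have "n^2 = 0"
    using zero_le_power2[of m] zero_le_power2[of n] by arith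
  with mn have "n = 0" "m = 1 \<or> m = -1"
    by (simp_all add: power2_eq_1_iff)
  with a show ?thesis by auto
qed

lemma in_O_cmod_less_2:
  assumes "in_O z" "cmod z < 2"
  obtains m n :: int where "z = of_int m + of_int n * omega" "\<bar>m\<bar> \<le> 1" "\<bar>n\<bar> \<le> 1"
proof -
  obtain m n :: int where z: "z = of_int m + of_int n * omega"
    and nz: "(cmod z)^2 = of_int (m^2 + 2 * n^2)"
    using assms(1) by (rule in_O_cmod_square)
  have "(cmod z)^2 < 2^2"
    using power_strict_mono[OF assms(2), of 2] by simp
  then have "real_of_int (m^2 + 2 * n^2) < real_of_int 4"
    using nz by simp
  then have "m^2 + 2 * n^2 < 4"
    by (simp only: of_int_less_iff)
  then have "m^2 < 4" "n^2 < 4"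
    using zero_le_power2[of m] zero_le_power2[of n] by linarith+
  then have "\<bar>m\<bar> < 2" "\<bar>n\<bar> < 2"
    using power_less_imp_less_base[of "\<bar>m\<bar>" 2 2] power_less_imp_less_base[of "\<bar>n\<bar>" 2 2] by simp_all
  with z show ?thesis using that by simp
qed

lemma british_flag_omega:
  fixes c v :: complex and r s :: real
  shows "(cmod c)^2 + (cmod (c + (of_real r + of_real s * omega) * v))^2
       = (cmod (c + of_real r * v))^2 + (cmod (c + of_real s * omega * v))^2"
  unfolding cmod_power2 by (simp add: power2_eq_square algebra_simps)

lemma cmod_square_omega_vertex:
  fixes w v s :: complex
  assumes "is_sign s"
  shows "(cmod (omega * w - s * v))^2 = (cmod w)^2 + (cmod (w + s * omega * v))^2 - (cmod v)^2"
  using assms unfolding cmod_power2 by (auto simp: power2_eq_square algebra_simps)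

lemma cmod_unit_shorten:
  fixes x :: complex
  assumes "cmod x = 1"
  shows "cmod (x + 1) < 1 \<or> cmod (x - 1) < 1 \<or> cmod (x + omega) < 1 \<or> cmod (x - omega) < 1"
proof -
  have x: "(Re x)^2 + (Im x)^2 = 1"
    using assms unfolding cmod_power2[symmetric] by simp
  have "(cmod (x + 1))^2 = 2 + 2 * Re x" "(cmod (x - 1))^2 = 2 - 2 * Re x"
    "(cmod (x + omega))^2 = 3 + 2 * (sqrt 2 * Im x)" "(cmod (x - omega))^2 = 3 - 2 * (sqrt 2 * Im x)"
    using x unfolding cmod_power2 by (simp_all add: power2_eq_square algebra_simps)
  moreover have "\<bar>sqrt 2 * Im x\<bar> > 1 \<or> \<bar>Re x\<bar> > 1/2"
  proof (rule disjCI)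
    assume "\<not> \<bar>Re x\<bar> > 1/2"
    then have "(Re x)^2 \<le> 1/4"
      using power_mono[of "\<bar>Re x\<bar>" "1/2" 2] by (simp add: power_divide)
    then have "(sqrt 2 * Im x)^2 > 1"
      using x by (simp add: power_mult_distrib)
    then show "\<bar>sqrt 2 * Im x\<bar> > 1"
      using abs_square_le_1[of "sqrt 2 * Im x"] by linarith
  qed
  moreover have lt1: "cmod y < 1" if "(cmod y)^2 < 1" for y
    using that by (simp add: abs_square_less_1)
  note lt1[of "x + 1"] lt1[of "x - 1"] lt1[of "x + omega"] lt1[of "x - omega"]
  ultimately show ?thesis
    by (auto simp: abs_if split: if_split_asm)
qed

lemma cmod_equal_shorten:
  fixes w v :: complex
  assumes "cmod w = cmod v" "v \<noteq> 0"
  shows "cmod (w + v) < cmod v \<or> cmod (w - v) < cmod v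
       \<or> cmod (w + omega * v) < cmod v \<or> cmod (w - omega * v) < cmod v"
proof -
  define x where "x = w / v"
  have w: "w = x * v" and "cmod x = 1"
    using assms by (simp_all add: x_def norm_divide)
  then have "cmod (x + e) < 1 \<Longrightarrow> cmod (w + e * v) < cmod v" for e
    using assms(2) by (simp add: w norm_mult flip: distrib_right)
  from this[of 1] this[of "-1"] this[of omega] this[of "- omega"] cmod_unit_shorten[OF \<open>cmod x = 1\<close>]
  show ?thesis by auto
qed

lemma cmod_less_2_of_shorter:
  fixes c v \<mu> :: complex
  assumes "cmod (c + \<mu> * v) < cmod v" "cmod c < cmod v"
  shows "cmod \<mu> < 2"
proof -
  have "cmod \<mu> * cmod v = cmod ((c + \<mu> * v) - c)"
    by (simp add: norm_mult)
  also have "\<dots> \<le> cmod (c + \<mu> * v) + cmod c"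
    by (rule norm_triangle_ineq4)
  also have "\<dots> < 2 * cmod v"
    using assms by simp
  finally show ?thesis
    by (metis mult_less_cancel_right norm_ge_zero not_less)
qed

section \<open>Bivariate polynomials and the slash action\<close>

definition poly2 :: "complex poly poly \<Rightarrow> complex \<Rightarrow> complex \<Rightarrow> complex" where
  "poly2 P z w = poly (poly P [:w:]) z"

lemma poly2_add [simp]: "poly2 (P + Q) z w = poly2 P z w + poly2 Q z w"
  and poly2_uminus [simp]: "poly2 (- P) z w = - poly2 P z w"
  and poly2_diff [simp]: "poly2 (P - Q) z w = poly2 P z w - poly2 Q z w"
  and poly2_mult [simp]: "poly2 (P * Q) z w = poly2 P z w * poly2 Q z w"
  and poly2_power [simp]: "poly2 (P ^ n) z w = poly2 P z w ^ n"
  and poly2_sum [simp]: "poly2 (sum F A) z w = (\<Sum>x\<in>A. poly2 (F x) z w)"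
  and poly2_smult [simp]: "poly2 (smult [:c:] P) z w = c * poly2 P z w"
  and poly2_const [simp]: "poly2 [:[:c:]:] z w = c"
  and poly2_linear_z [simp]: "poly2 [:[:b, a:]:] z w = b + a * z"
  and poly2_linear_w [simp]: "poly2 [:[:b:], [:a:]:] z w = b + a * w"
  by (simp_all add: poly2_def poly_sum mult.commute)

lemma poly_altdef_le:
  fixes p :: "'a::comm_semiring_1 poly"
  assumes "degree p \<le> n"
  shows "poly p x = (\<Sum>i\<le>n. coeff p i * x ^ i)"
proof -
  have "poly p x = poly (\<Sum>i\<le>n. monom (coeff p i) i) x"
    by (simp only: poly_as_sum_of_monoms'[OF assms])
  then show ?thesis
    by (simp add: poly_sum poly_monom)
qed

lemma poly2_altdef: "poly2 P z w = poly (map_poly (\<lambda>q. poly q z) P) w"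
proof -
  have "poly2 P z w = (\<Sum>j\<le>degree P. poly (coeff P j) z * w ^ j)"
    unfolding poly2_def poly_altdef[of P] by (simp add: poly_sum)
  also have "\<dots> = poly (map_poly (\<lambda>q. poly q z) P) w"
    by (subst poly_altdef_le[OF map_poly_degree_leq]) (simp add: coeff_map_poly)
  finally show ?thesis .
qed

lemma poly2_eq_0_cofinite:
  assumes "finite A" "finite B" and zero: "\<And>z w. z \<notin> A \<Longrightarrow> w \<notin> B \<Longrightarrow> poly2 P z w = 0"
  shows "P = 0"
proof -
  have cofinite: "infinite (- C)" if "finite C" for C :: "complex set"
    using that by (simp add: Compl_eq_Diff_UNIV infinite_UNIV_char_0)
  have "map_poly (\<lambda>q. poly q z) P = 0" if "z \<notin> A" for z
  proof (rule ccontr)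
    assume "map_poly (\<lambda>q. poly q z) P \<noteq> 0"
    moreover have "- B \<subseteq> {w. poly (map_poly (\<lambda>q. poly q z) P) w = 0}"
      using zero[OF that] by (auto simp: poly2_altdef)
    ultimately show False
      using poly_roots_finite cofinite[OF assms(2)] finite_subset by blast
  qed
  then have "- A \<subseteq> {z. poly (coeff P j) z = 0}" for j
    by (auto simp: poly_eq_iff coeff_map_poly)
  then have "coeff P j = 0" for j
    using poly_roots_finite cofinite[OF assms(1)] finite_subset by blast
  then show ?thesis
    by (simp add: poly_eq_iff)
qed

lemma poly2_eqI: "(\<And>z w. poly2 P z w = poly2 Q z w) \<Longrightarrow> P = Q"
  using poly2_eq_0_cofinite[of "{}" "{}" "P - Q"] by simp

definition bihom :: "nat \<Rightarrow> complex poly poly \<Rightarrow> complex \<Rightarrow> complex \<Rightarrow> complex \<Rightarrow> complex \<Rightarrow> complex" where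
  "bihom k P z1 z2 w1 w2 =
     (\<Sum>i\<le>k. \<Sum>j\<le>k. coeff (coeff P j) i * z1 ^ i * z2 ^ (k - i) * w1 ^ j * w2 ^ (k - j))"

lemma bihom_add: "bihom k (P + Q) z1 z2 w1 w2 = bihom k P z1 z2 w1 w2 + bihom k Q z1 z2 w1 w2"
  and bihom_smult: "bihom k (smult [:c:] P) z1 z2 w1 w2 = c * bihom k P z1 z2 w1 w2"
  and bihom_uminus: "bihom k (- P) z1 z2 w1 w2 = - bihom k P z1 z2 w1 w2"
  unfolding bihom_def by (simp_all add: algebra_simps sum.distrib sum_distrib_left sum_negf)

lemma poly2_slash:
  "poly2 (slash k P (a, b, c, e)) z w
     = bihom k P (a * z + b) (c * z + e) (cnj a * w + cnj b) (cnj c * w + cnj e)"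
  unfolding slash_def bihom_def by (simp add: ac_simps)

lemma bihom_scale:
  "bihom k P (t * x1) (t * x2) (s * y1) (s * y2) = t ^ k * s ^ k * bihom k P x1 x2 y1 y2"
  unfolding bihom_def sum_distrib_left
proof (intro sum.cong refl)
  fix i j assume "i \<in> {..k}" "j \<in> {..k}"
  then have "t ^ k = t ^ i * t ^ (k - i)" "s ^ k = s ^ j * s ^ (k - j)"
    by (simp_all flip: power_add)
  then show "coeff (coeff P j) i * (t * x1) ^ i * (t * x2) ^ (k - i) * (s * y1) ^ j * (s * y2) ^ (k - j)
    = t ^ k * s ^ k * (coeff (coeff P j) i * x1 ^ i * x2 ^ (k - i) * y1 ^ j * y2 ^ (k - j))"
    by (simp add: power_mult_distrib ac_simps)
qed

lemma poly2_Vkk: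
  assumes "P \<in> Vkk k"
  shows "poly2 P z w = bihom k P z 1 w 1"
proof -
  have dP: "degree P \<le> k" and dc: "\<And>j. degree (coeff P j) \<le> k"
    using assms by (auto simp: Vkk_def)
  have "poly2 P z w = (\<Sum>j\<le>k. poly (coeff P j) z * w ^ j)"
    unfolding poly2_def poly_altdef_le[OF dP, of "[:w:]"] by (simp add: poly_sum)
  also have "\<dots> = (\<Sum>j\<le>k. \<Sum>i\<le>k. coeff (coeff P j) i * z ^ i * w ^ j)"
    by (simp add: poly_altdef_le[OF dc] sum_distrib_right)
  also have "\<dots> = bihom k P z 1 w 1"
    unfolding bihom_def by (subst sum.swap) simp
  finally show ?thesis .
qed

definition bideg_le :: "nat \<Rightarrow> nat \<Rightarrow> complex poly poly set" where
  "bideg_le m n = {P. degree P \<le> n \<and> (\<forall>j. degree (coeff P j) \<le> m)}"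

lemma Vkk_eq_bideg_le: "Vkk k = bideg_le k k"
  by (simp add: Vkk_def bideg_le_def)

lemma bideg_le_mult:
  assumes "P \<in> bideg_le m n" "Q \<in> bideg_le m' n'"
  shows "P * Q \<in> bideg_le (m + m') (n + n')"
proof -
  have dP: "degree P \<le> n" "\<And>j. degree (coeff P j) \<le> m"
    and dQ: "degree Q \<le> n'" "\<And>j. degree (coeff Q j) \<le> m'"
    using assms by (auto simp: bideg_le_def)
  have "degree (P * Q) \<le> n + n'"
    using degree_mult_le[of P Q] dP(1) dQ(1) by linarith
  moreover have "degree (coeff (P * Q) j) \<le> m + m'" for j
    unfolding coeff_mult
  proof (rule degree_sum_le)
    fix i
    show "degree (coeff P i * coeff Q (j - i)) \<le> m + m'"
      using degree_mult_le[of "coeff P i" "coeff Q (j - i)"] dP(2)[of i] dQ(2)[of "j - i"]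
      by linarith
  qed simp
  ultimately show ?thesis
    by (simp add: bideg_le_def)
qed

lemma bideg_le_power: "P \<in> bideg_le m n \<Longrightarrow> P ^ r \<in> bideg_le (m * r) (n * r)"
proof (induction r)
  case 0
  then show ?case
    by (simp add: bideg_le_def coeff_1)
next
  case (Suc r)
  then show ?case
    using bideg_le_mult[of P m n "P ^ r" "m * r" "n * r"] by (simp add: add.commute)
qed

lemma bideg_le_sum:
  "finite A \<Longrightarrow> (\<And>x. x \<in> A \<Longrightarrow> F x \<in> bideg_le m n) \<Longrightarrow> sum F A \<in> bideg_le m n"
  by (induction A rule: finite_induct) (auto simp: bideg_le_def intro: degree_add_le)

lemma bideg_le_const: "[:[:c:]:] \<in> bideg_le 0 0"
  and bideg_le_linear_z: "[:[:b, a:]:] \<in> bideg_le 1 0"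
  and bideg_le_linear_w: "[:[:b:], [:a:]:] \<in> bideg_le 0 1"
  by (auto simp: bideg_le_def coeff_pCons split: nat.splits)

lemma slash_in_Vkk: "slash k P M \<in> Vkk k"
proof -
  obtain a b c e where M: "M = (a, b, c, e)"
    by (cases M) auto
  have "[:[:coeff (coeff P j) i:]:] * [:[:b, a:]:] ^ i * [:[:e, c:]:] ^ (k - i)
        * [:[:cnj b:], [:cnj a:]:] ^ j * [:[:cnj e:], [:cnj c:]:] ^ (k - j) \<in> bideg_le k k"
    if "i \<le> k" "j \<le> k" for i j
  proof -
    have "[:[:coeff (coeff P j) i:]:] * [:[:b, a:]:] ^ i * [:[:e, c:]:] ^ (k - i)
        * [:[:cnj b:], [:cnj a:]:] ^ j * [:[:cnj e:], [:cnj c:]:] ^ (k - j)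
        \<in> bideg_le (0 + 1 * i + 1 * (k - i) + 0 * j + 0 * (k - j))
                   (0 + 0 * i + 0 * (k - i) + 1 * j + 1 * (k - j))"
      by (intro bideg_le_mult bideg_le_power bideg_le_const bideg_le_linear_z bideg_le_linear_w)
    with that show ?thesis
      by simp
  qed
  then show ?thesis
    unfolding M slash_def Vkk_eq_bideg_le by (auto intro!: bideg_le_sum)
qed

lemma bihom_slash:
  assumes "z2 \<noteq> 0" "w2 \<noteq> 0"
  shows "bihom k (slash k P (a, b, c, e)) z1 z2 w1 w2
       = bihom k P (a * z1 + b * z2) (c * z1 + e * z2) (cnj a * w1 + cnj b * w2) (cnj c * w1 + cnj e * w2)"
proof -
  have "bihom k (slash k P (a, b, c, e)) z1 z2 w1 w2
      = z2 ^ k * w2 ^ k * poly2 (slash k P (a, b, c, e)) (z1 / z2) (w1 / w2)"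
    using bihom_scale[of k "slash k P (a, b, c, e)" z2 "z1 / z2" 1 w2 "w1 / w2" 1] assms
    by (simp add: poly2_Vkk[OF slash_in_Vkk])
  also have "\<dots> = bihom k P (z2 * (a * (z1 / z2) + b)) (z2 * (c * (z1 / z2) + e))
      (w2 * (cnj a * (w1 / w2) + cnj b)) (w2 * (cnj c * (w1 / w2) + cnj e))"
    by (simp add: poly2_slash bihom_scale)
  also have "\<dots> = bihom k P (a * z1 + b * z2) (c * z1 + e * z2)
      (cnj a * w1 + cnj b * w2) (cnj c * w1 + cnj e * w2)"
  proof -
    have "z2 * (a * (z1 / z2) + b) = a * z1 + b * z2" "z2 * (c * (z1 / z2) + e) = c * z1 + e * z2"
      "w2 * (cnj a * (w1 / w2) + cnj b) = cnj a * w1 + cnj b * w2"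
      "w2 * (cnj c * (w1 / w2) + cnj e) = cnj c * w1 + cnj e * w2"
      using assms by (simp_all add: field_simps)
    then show ?thesis
      by simp
  qed
  finally show ?thesis .
qed

lemma finite_linear_roots:
  assumes "c \<noteq> 0 \<or> e \<noteq> 0" shows "finite {z :: complex. c * z + e = 0}"
proof (cases "c = 0")
  case False
  then have "{z. c * z + e = 0} \<subseteq> {- e / c}"
    by (auto simp: field_simps add_eq_0_iff)
  then show ?thesis
    using finite_subset by blast
qed (use assms in simp)

text \<open>The two sides agree as functions away from the poles of the fractional linear maps,
  hence as polynomials.\<close>
lemma slash_mmul:
  assumes "mdet N \<noteq> 0"
  shows "slash k (slash k P M) N = slash k P (mmul M N)"
proof -
  obtain a b c e where M: "M = (a, b, c, e)"
    by (cases M) auto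
  obtain a' b' c' e' where N: "N = (a', b', c', e')"
    by (cases N) auto
  have "c' \<noteq> 0 \<or> e' \<noteq> 0" "cnj c' \<noteq> 0 \<or> cnj e' \<noteq> 0"
    using assms N by auto
  then have "slash k (slash k P M) N - slash k P (mmul M N) = 0"
  proof (elim poly2_eq_0_cofinite[OF finite_linear_roots finite_linear_roots])
    fix z w
    assume "z \<notin> {z. c' * z + e' = 0}" "w \<notin> {w. cnj c' * w + cnj e' = 0}"
    then have "c' * z + e' \<noteq> 0" "cnj c' * w + cnj e' \<noteq> 0"
      by auto
    then show "poly2 (slash k (slash k P M) N - slash k P (mmul M N)) z w = 0"
      unfolding M N mmul.simps poly2_diff poly2_slash bihom_slash[OF \<open>c' * z + e' \<noteq> 0\<close> \<open>cnj c' * w + cnj e' \<noteq> 0\<close>]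
      by (simp add: algebra_simps)
  qed
  then show ?thesis
    by simp
qed

lemma slash_id: "P \<in> Vkk k \<Longrightarrow> slash k P (1, 0, 0, 1) = P"
  by (rule poly2_eqI) (simp add: poly2_slash poly2_Vkk)

lemma slash_mneg: "slash k P (mneg M) = slash k P M"
proof (cases M)
  case (fields a b c e)
  have "bihom k P ((-1) * (a * z + b)) ((-1) * (c * z + e)) ((-1) * (cnj a * w + cnj b)) ((-1) * (cnj c * w + cnj e))
      = bihom k P (a * z + b) (c * z + e) (cnj a * w + cnj b) (cnj c * w + cnj e)" for z w
    by (simp only: bihom_scale flip: power_mult_distrib) simp
  then show ?thesis
    unfolding fields by (intro poly2_eqI) (simp add: poly2_slash)
qed

lemma slash_add: "slash k (P + Q) M = slash k P M + slash k Q M"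
  and slash_smult: "slash k (smult [:c:] P) M = smult [:c:] (slash k P M)"
  and slash_uminus: "slash k (- P) M = - slash k P M"
  by (rule poly2_eqI, cases M, simp add: poly2_slash bihom_add bihom_smult bihom_uminus)+

lemma slash_0 [simp]: "slash k 0 M = 0"
  using slash_smult[of k 0 0 M] by simp

section \<open>Modular symbols on unimodular rows\<close>

type_synonym row = "complex \<times> complex"

definition rdet :: "row \<Rightarrow> row \<Rightarrow> complex" where
  "rdet w v = fst w * snd v - snd w * fst v"

definition in_O2 :: "row \<Rightarrow> bool" where
  "in_O2 v \<longleftrightarrow> in_O (fst v) \<and> in_O (snd v)"

definition adjacent :: "row \<Rightarrow> row \<Rightarrow> bool" where
  "adjacent v w \<longleftrightarrow> in_O2 v \<and> in_O2 w \<and> is_sign (rdet w v)"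

definition rcomb :: "complex \<Rightarrow> row \<Rightarrow> complex \<Rightarrow> row \<Rightarrow> row" where
  "rcomb a x b y = (a * fst x + b * fst y, a * snd x + b * snd y)"

definition rneg :: "row \<Rightarrow> row" where
  "rneg v = (- fst v, - snd v)"

definition rmul :: "row \<Rightarrow> mat2 \<Rightarrow> row" where
  "rmul v M = (case M of (a, b, c, e) \<Rightarrow> (fst v * a + snd v * c, fst v * b + snd v * e))"

text \<open>The modular symbol of the edge from \<open>v\<close> to \<open>w\<close>; the sign of the second row makes the
  determinant \<open>1\<close> whenever \<open>rdet w v = \<plusminus>1\<close>.\<close>
definition msym :: "nat \<Rightarrow> complex poly poly \<Rightarrow> row \<Rightarrow> row \<Rightarrow> complex poly poly" where
  "msym k P v w = slash k P (fst v, snd v, - rdet w v * fst w, - rdet w v * snd w)"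

lemma fst_rneg [simp]: "fst (rneg v) = - fst v"
  by (simp add: rneg_def)

lemma rdet_swap: "rdet v w = - rdet w v"
  and rdet_self [simp]: "rdet v v = 0"
  and rdet_rcomb_left: "rdet (rcomb a x b y) v = a * rdet x v + b * rdet y v"
  and rdet_rcomb_right: "rdet w (rcomb a x b y) = a * rdet w x + b * rdet w y"
  and rdet_rneg_left [simp]: "rdet (rneg w) v = - rdet w v"
  and rdet_rneg_right [simp]: "rdet w (rneg v) = - rdet w v"
  and rdet_rmul: "rdet (rmul w M) (rmul v M) = rdet w v * mdet M"
  by (cases M; simp add: rdet_def rcomb_def rneg_def rmul_def algebra_simps)+

lemma is_sign_rdet_swap: "is_sign (rdet v w) \<longleftrightarrow> is_sign (rdet w v)"
  by (auto simp: rdet_swap[of v w] minus_equation_iff)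

lemma in_O2_rcomb: "in_O a \<Longrightarrow> in_O b \<Longrightarrow> in_O2 x \<Longrightarrow> in_O2 y \<Longrightarrow> in_O2 (rcomb a x b y)"
  by (simp add: in_O2_def rcomb_def in_O_add in_O_mult)

lemma in_O2_rneg [simp]: "in_O2 (rneg v) \<longleftrightarrow> in_O2 v"
  by (simp add: in_O2_def rneg_def)

lemma adjacent_commute: "adjacent v w \<longleftrightarrow> adjacent w v"
  by (auto simp: adjacent_def is_sign_rdet_swap)

lemma adjacent_rneg [simp]: "adjacent (rneg v) w \<longleftrightarrow> adjacent v w"
  by (auto simp: adjacent_def minus_equation_iff)

lemma adjacent_shift: "adjacent v x \<Longrightarrow> in_O b \<Longrightarrow> adjacent v (rcomb 1 x b v)"
  by (simp add: adjacent_def in_O2_rcomb rdet_rcomb_left)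

lemma adjacent_rmul:
  assumes "adjacent v w" "M \<in> SL2O"
  shows "adjacent (rmul v M) (rmul w M)"
proof (cases M)
  case (fields a b c e)
  then show ?thesis
    using assms rdet_rmul[of w M v]
    by (auto simp: adjacent_def in_O2_def SL2O_def rmul_def in_O_add in_O_mult)
qed

lemma msym_rneg_left [simp]: "msym k P (rneg v) w = msym k P v w"
proof -
  have "(fst (rneg v), snd (rneg v), - rdet w (rneg v) * fst w, - rdet w (rneg v) * snd w)
      = mneg (fst v, snd v, - rdet w v * fst w, - rdet w v * snd w)"
    by (simp add: rneg_def rdet_def algebra_simps)
  then show ?thesis
    unfolding msym_def by (simp only: slash_mneg)
qed

lemma msym_rneg_right [simp]: "msym k P v (rneg w) = msym k P v w"
  by (simp add: msym_def rneg_def rdet_def algebra_simps)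

lemma msym_rmul:
  assumes "mdet M = 1"
  shows "msym k P (rmul v M) (rmul w M) = slash k (msym k P v w) M"
proof -
  have "msym k P (rmul v M) (rmul w M)
      = slash k P (mmul (fst v, snd v, - rdet w v * fst w, - rdet w v * snd w) M)"
    unfolding msym_def rdet_rmul assms by (cases M) (simp add: rmul_def algebra_simps)
  also have "\<dots> = slash k (msym k P v w) M"
    using assms by (simp add: slash_mmul msym_def)
  finally show ?thesis .
qed

definition rows :: "row \<Rightarrow> row \<Rightarrow> mat2" where
  "rows w v = (fst w, snd w, fst v, snd v)"

lemma mdet_rows [simp]: "mdet (rows w v) = rdet w v"
  by (cases v) (simp add: rows_def rdet_def)

lemma rmul_rows [simp]: "rmul x (rows w v) = rcomb (fst x) w (snd x) v"
  by (cases v) (simp add: rows_def rmul_def rcomb_def algebra_simps)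

lemma rcomb_0_1 [simp]: "rcomb 0 x 1 y = y"
  and rcomb_1_0 [simp]: "rcomb 1 x 0 y = x"
  by (simp_all add: rcomb_def)

locale Wkk_elem =
  fixes k :: nat and P :: "complex poly poly"
  assumes in_Wkk: "P \<in> Wkk k"
begin

lemma in_Vkk: "P \<in> Vkk k"
  and rel_S: "P + slash k P matS = 0"
  and rel_U: "P + slash k P matU + slash k P (mmul matU matU) = 0"
  and rel_Tw: "P + slash k P (mmul matS matTw) + slash k P (mmul matTw matS)
       + slash k P (mmul (mmul (mmul matTwinv matS) matTw) matS) = 0"
  using in_Wkk by (simp_all add: Wkk_def)

lemma slash_S: "slash k P matS = - P"
  using rel_S by (simp add: eq_neg_iff_add_eq_0 add.commute)

lemma msym_swap:
  assumes "is_sign (rdet w v)"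
  shows "msym k P w v = - msym k P v w"
proof -
  define d where "d = rdet w v"
  have dd: "d * d = 1"
    using assms d_def by auto
  define M where "M = (fst v, snd v, - d * fst w, - d * snd w)"
  define X where "X = ((0::complex), - d, d, (0::complex))"
  have "mdet M = 1"
    unfolding M_def using dd by (simp add: d_def rdet_def algebra_simps)
  have "mmul X M = (fst w, snd w, - rdet v w * fst v, - rdet v w * snd v)"
    unfolding X_def M_def using dd by (simp add: rdet_swap[of v w] flip: d_def mult.assoc)
  then have "msym k P w v = slash k (slash k P X) M"
    using \<open>mdet M = 1\<close> by (simp add: msym_def slash_mmul)
  also have "slash k P X = - P"
  proof -
    have "X = matS \<or> X = mneg matS"
      using assms by (auto simp: X_def d_def matS_def)
    then show ?thesis
      by (auto simp: slash_mneg slash_S)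
  qed
  finally show ?thesis
    by (simp add: slash_uminus msym_def M_def d_def)
qed

lemma msym_swap_adjacent: "adjacent v w \<Longrightarrow> msym k P w v = - msym k P v w"
  by (simp add: adjacent_def msym_swap)

lemma msym_S: "msym k P (0, 1) (1, 0) = slash k P matS"
  using slash_mneg[of k P matS] by (simp add: msym_def rdet_def matS_def)

lemma triangle_base: "msym k P (0, 1) (1, 0) + msym k P (1, 0) (1, 1) + msym k P (1, 1) (0, 1) = 0"
proof -
  have "mdet matT \<noteq> 0"
    by (simp add: matT_def)
  then have "slash k P matT + slash k P (mmul matU matT) + slash k P (mmul (mmul matU matU) matT) = 0"
    using arg_cong[OF rel_U, of "\<lambda>Q. slash k Q matT"] by (simp add: slash_add slash_mmul)
  moreover have "msym k P (1, 0) (1, 1) = slash k P (mmul matU matT)"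
    "msym k P (1, 1) (0, 1) = slash k P matT" "mmul (mmul matU matU) matT = matS"
    by (simp_all add: msym_def rdet_def matU_def matT_def matS_def)
  ultimately show ?thesis
    by (simp add: msym_S ac_simps)
qed

lemma quadrangle_base:
  "msym k P (0, 1) (1, 0) + msym k P (1, 0) (omega, -1)
     + msym k P (omega, -1) (1, omega) + msym k P (1, omega) (0, 1) = 0"
proof -
  have "mdet matS \<noteq> 0"
    by (simp add: matS_def)
  then have "slash k P matS + slash k P (mmul (mmul matS matTw) matS)
      + slash k P (mmul (mmul matTw matS) matS)
      + slash k P (mmul (mmul (mmul (mmul matTwinv matS) matTw) matS) matS) = 0"
    using arg_cong[OF rel_Tw, of "\<lambda>Q. slash k Q matS"] by (simp add: slash_add slash_mmul)
  moreover have "slash k P (mmul (mmul matS matTw) matS) = msym k P (1, 0) (omega, -1)"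
  proof -
    have "mmul (mmul matS matTw) matS = mneg (1, 0, -omega, 1)"
      by (simp add: matS_def matTw_def)
    then show ?thesis
      by (simp only: slash_mneg) (simp add: msym_def rdet_def)
  qed
  moreover have "slash k P (mmul (mmul matTw matS) matS) = msym k P (1, omega) (0, 1)"
  proof -
    have "mmul (mmul matTw matS) matS = mneg (1, omega, 0, 1)"
      by (simp add: matS_def matTw_def)
    then show ?thesis
      by (simp only: slash_mneg) (simp add: msym_def rdet_def)
  qed
  moreover have "slash k P (mmul (mmul (mmul (mmul matTwinv matS) matTw) matS) matS)
      = msym k P (omega, -1) (1, omega)"
    by (simp add: matS_def matTw_def matTwinv_def msym_def rdet_def)
  ultimately show ?thesis
    by (simp add: msym_S ac_simps)
qed

lemma msym_rows:
  assumes "rdet w v = 1"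
  shows "slash k (msym k P x y) (rows w v) = msym k P (rcomb (fst x) w (snd x) v) (rcomb (fst y) w (snd y) v)"
  using msym_rmul[of "rows w v" k P x y] assms by simp

lemma triangle_relation_pos:
  assumes "rdet w v = 1" "is_sign e"
  shows "msym k P v w + msym k P w (rcomb 1 w e v) + msym k P (rcomb 1 w e v) v = 0"
proof -
  have tri: "msym k P v w + msym k P w (rcomb 1 w 1 v) + msym k P (rcomb 1 w 1 v) v = 0"
    if "rdet w v = 1" for v w
    using arg_cong[OF triangle_base, of "\<lambda>Q. slash k Q (rows w v)"]
    by (simp add: slash_add msym_rows[OF that])
  show ?thesis
    using assms(2)
  proof
    assume "e = -1"
    txt \<open>The triangle \<open>v, w', w' + v\<close> with \<open>w' = w - v\<close>, traversed backwards.\<close>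
    define w' where "w' = rcomb 1 w (-1) v"
    have "rdet w' v = 1"
      using assms(1) by (simp add: w'_def rdet_rcomb_left)
    have "rcomb 1 w' 1 v = w"
      by (simp add: w'_def rcomb_def)
    have "msym k P v w' + msym k P w' w + msym k P w v = 0"
      using tri[of w' v, OF \<open>rdet w' v = 1\<close>] unfolding \<open>rcomb 1 w' 1 v = w\<close> .
    moreover have "msym k P w' w = - msym k P w w'"
      by (rule msym_swap) (simp add: w'_def rdet_rcomb_left rdet_swap[of v w] assms(1))
    moreover have "msym k P w v = - msym k P v w"
      by (rule msym_swap) (simp add: assms(1))
    moreover have "msym k P v w' = - msym k P w' v"
      by (rule msym_swap) (simp add: rdet_swap[of v w'] \<open>rdet w' v = 1\<close>)
    ultimately show ?thesis
      unfolding \<open>e = -1\<close> w'_def[symmetric] by (simp add: algebra_simps neg_eq_iff_add_eq_0)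
  qed (use tri assms in simp)
qed

lemma triangle_relation:
  assumes "is_sign (rdet w v)" "is_sign e"
  shows "msym k P v w + msym k P w (rcomb 1 w e v) + msym k P (rcomb 1 w e v) v = 0"
  using assms(1)
proof
  assume "rdet w v = -1"
  moreover have "is_sign (- e)" "rcomb 1 w (- e) (rneg v) = rcomb 1 w e v"
    using assms(2) by (auto simp: rcomb_def rneg_def)
  ultimately show ?thesis
    using triangle_relation_pos[of w "rneg v" "- e"] by simp
qed (use triangle_relation_pos assms in blast)

lemma quadrangle_relation_pos:
  assumes "rdet w v = 1" "is_sign s"
  shows "msym k P v w + msym k P w (rcomb omega w (- s) v)
     + msym k P (rcomb omega w (- s) v) (rcomb 1 w (s * omega) v) + msym k P (rcomb 1 w (s * omega) v) v = 0"
proof -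
  have quad: "msym k P v w + msym k P w (rcomb omega w (-1) v)
      + msym k P (rcomb omega w (-1) v) (rcomb 1 w omega v) + msym k P (rcomb 1 w omega v) v = 0"
    if "rdet w v = 1" for v w
    using arg_cong[OF quadrangle_base, of "\<lambda>Q. slash k Q (rows w v)"]
    by (simp add: slash_add msym_rows[OF that])
  show ?thesis
    using assms(2)
  proof
    assume "s = -1"
    txt \<open>The quadrangle for \<open>v\<close> and \<open>w' = w - \<omega>v\<close>, traversed backwards.\<close>
    define w' where "w' = rcomb 1 w (- omega) v"
    define u where "u = rcomb omega w 1 v"
    have "rdet w' v = 1"
      using assms(1) by (simp add: w'_def rdet_rcomb_left)
    have "rcomb 1 w' omega v = w" "rcomb omega w' (-1) v = u"
      by (simp_all add: w'_def u_def rcomb_def algebra_simps)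
    have "msym k P v w' + msym k P w' u + msym k P u w + msym k P w v = 0"
      using quad[of w' v, OF \<open>rdet w' v = 1\<close>]
      unfolding \<open>rcomb 1 w' omega v = w\<close> \<open>rcomb omega w' (-1) v = u\<close> .
    moreover have "msym k P w' u = - msym k P u w'"
      by (rule msym_swap) (simp add: u_def w'_def rdet_rcomb_left rdet_rcomb_right rdet_swap[of v w] assms(1))
    moreover have "msym k P u w = - msym k P w u"
      by (rule msym_swap) (simp add: u_def rdet_rcomb_left rdet_swap[of v w] assms(1))
    moreover have "msym k P w v = - msym k P v w"
      by (rule msym_swap) (simp add: assms(1))
    moreover have "msym k P v w' = - msym k P w' v"
      by (rule msym_swap) (simp add: rdet_swap[of v w'] \<open>rdet w' v = 1\<close>)
    ultimately show ?thesis
      unfolding \<open>s = -1\<close> by (simp add: u_def w'_def algebra_simps neg_eq_iff_add_eq_0)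
  qed (use quad assms in simp)
qed

lemma quadrangle_relation:
  assumes "is_sign (rdet w v)" "is_sign s"
  shows "msym k P v w + msym k P w (rcomb omega w (- s) v)
     + msym k P (rcomb omega w (- s) v) (rcomb 1 w (s * omega) v) + msym k P (rcomb 1 w (s * omega) v) v = 0"
  using assms(1)
proof
  assume "rdet w v = -1"
  moreover have "is_sign (- s)" "rcomb omega w (- (- s)) (rneg v) = rcomb omega w (- s) v"
    "rcomb 1 w (- s * omega) (rneg v) = rcomb 1 w (s * omega) v"
    using assms(2) by (auto simp: rcomb_def rneg_def)
  ultimately show ?thesis
    using quadrangle_relation_pos[of w "rneg v" "- s"] by simp
qed (use quadrangle_relation_pos assms in blast)

end

section \<open>Summing modular symbols along a Euclidean descent\<close>

lemma rdet_cramer: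
  "rdet c v * fst x = rdet x v * fst c + rdet c x * fst v"
  "rdet c v * snd x = rdet x v * snd c + rdet c x * snd v"
  by (simp_all add: rdet_def algebra_simps)

lemma rcomb_of_rdet_eq:
  assumes "is_sign (rdet c v)" "rdet w v = rdet c v"
  shows "w = rcomb 1 c (rdet c v * rdet c w) v"
  using assms rdet_cramer[of c v w]
  by (auto simp: rcomb_def prod_eq_iff minus_equation_iff algebra_simps)

definition height :: "row \<Rightarrow> nat" where
  "height v = normO (fst v)"

definition unimodular :: "row \<Rightarrow> bool" where
  "unimodular v \<longleftrightarrow> (\<exists>w. adjacent v w)"

definition descend :: "row \<Rightarrow> row" where
  "descend v = (SOME w. adjacent v w \<and> height w < height v)"

lemma of_nat_height: "in_O2 v \<Longrightarrow> real (height v) = (cmod (fst v))^2"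
  by (simp add: height_def in_O2_def of_nat_normO)

lemma height_less_iff: "in_O2 v \<Longrightarrow> in_O2 w \<Longrightarrow> height v < height w \<longleftrightarrow> cmod (fst v) < cmod (fst w)"
  by (simp add: height_def in_O2_def normO_less_iff)

lemma height_eq_iff: "in_O2 v \<Longrightarrow> in_O2 w \<Longrightarrow> height v = height w \<longleftrightarrow> cmod (fst v) = cmod (fst w)"
  by (simp add: height_def in_O2_def normO_eq_iff)

lemma height_eq_0_iff: "in_O2 v \<Longrightarrow> height v = 0 \<longleftrightarrow> fst v = 0"
  by (simp add: height_def in_O2_def normO_eq_0_iff)

lemma height_rneg [simp]: "height (rneg v) = height v"
  by (simp add: height_def rneg_def normO_def)

lemma unimodular_rneg [simp]: "unimodular (rneg v) \<longleftrightarrow> unimodular v"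
  by (simp add: unimodular_def)

lemma unimodular_if_adjacent: "adjacent v w \<Longrightarrow> unimodular v" "adjacent v w \<Longrightarrow> unimodular w"
  by (meson unimodular_def adjacent_commute)+

lemma exists_lower_adjacent:
  assumes "unimodular v" "fst v \<noteq> 0"
  shows "\<exists>w. adjacent v w \<and> height w < height v"
proof -
  obtain x where x: "adjacent v x"
    using assms(1) unimodular_def by auto
  then have "in_O2 v" "in_O2 x"
    by (simp_all add: adjacent_def)
  then obtain l where "in_O l" "cmod (fst x + l * fst v) < cmod (fst v)"
    using in_O_division[of "fst x" "fst v"] assms(2) by (auto simp: in_O2_def)
  moreover have "adjacent v (rcomb 1 x l v)"
    using x \<open>in_O l\<close> by (rule adjacent_shift)
  ultimately have "height (rcomb 1 x l v) < height v"
    using \<open>in_O2 v\<close> by (auto simp: height_less_iff adjacent_def rcomb_def)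
  with \<open>adjacent v (rcomb 1 x l v)\<close> show ?thesis
    by blast
qed

lemma adjacent_descend: "unimodular v \<Longrightarrow> fst v \<noteq> 0 \<Longrightarrow> adjacent v (descend v)"
  and height_descend_less: "unimodular v \<Longrightarrow> fst v \<noteq> 0 \<Longrightarrow> height (descend v) < height v"
  using someI_ex[OF exists_lower_adjacent] unfolding descend_def by blast+

text \<open>The value of the cocycle attached to \<open>P\<close> at any matrix with bottom row \<open>v\<close>.\<close>
function descent_sum :: "nat \<Rightarrow> complex poly poly \<Rightarrow> row \<Rightarrow> complex poly poly" where
  "descent_sum k P v = (if unimodular v \<and> fst v \<noteq> 0
     then msym k P v (descend v) + descent_sum k P (descend v) else 0)"
  by auto
termination
  by (relation "measure (\<lambda>(k, P, v). height v)") (auto intro: height_descend_less)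

declare descent_sum.simps [simp del]

lemma descent_sum_descend:
  "unimodular v \<Longrightarrow> fst v \<noteq> 0 \<Longrightarrow> descent_sum k P v = msym k P v (descend v) + descent_sum k P (descend v)"
  and descent_sum_fst_0: "fst v = 0 \<Longrightarrow> descent_sum k P v = 0"
  and descent_sum_not_unimodular: "\<not> unimodular v \<Longrightarrow> descent_sum k P v = 0"
  by (simp_all add: descent_sum.simps)

lemma lower_adjacent_difference:
  assumes "adjacent v c" "adjacent v w" "rdet w v = rdet c v"
    and "height c < height v" "height w < height v"
  obtains m n :: int where "w = rcomb 1 c (of_int m + of_int n * omega) v" "\<bar>m\<bar> \<le> 1" "\<bar>n\<bar> \<le> 1"
proof -
  have "in_O2 v" "in_O2 c" "in_O2 w" and "is_sign (rdet c v)"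
    using assms(1,2) by (simp_all add: adjacent_def)
  define \<mu> where "\<mu> = rdet c v * rdet c w"
  have w: "w = rcomb 1 c \<mu> v"
    unfolding \<mu>_def using \<open>is_sign (rdet c v)\<close> assms(3) by (rule rcomb_of_rdet_eq)
  have "in_O \<mu>"
    using \<open>in_O2 c\<close> \<open>in_O2 v\<close> \<open>in_O2 w\<close>
    by (simp add: \<mu>_def rdet_def in_O2_def in_O_mult in_O_diff)
  moreover have "cmod \<mu> < 2"
  proof (rule cmod_less_2_of_shorter)
    have "cmod (fst w) < cmod (fst v)" "cmod (fst c) < cmod (fst v)"
      using assms(4,5) \<open>in_O2 c\<close> \<open>in_O2 v\<close> \<open>in_O2 w\<close> by (simp_all add: height_less_iff)
    then show "cmod (fst c + \<mu> * fst v) < cmod (fst v)" "cmod (fst c) < cmod (fst v)"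
      by (simp_all add: w rcomb_def)
  qed
  ultimately obtain m n where "\<mu> = of_int m + of_int n * omega" "\<bar>m\<bar> \<le> 1" "\<bar>n\<bar> \<le> 1"
    by (rule in_O_cmod_less_2)
  with w show thesis
    using that by simp
qed

lemma triangle_adjacent:
  assumes "adjacent v w" "is_sign e"
  shows "adjacent v (rcomb 1 w e v)" "adjacent w (rcomb 1 w e v)"
proof -
  have "rdet (rcomb 1 w e v) w = e * rdet v w"
    by (simp add: rdet_rcomb_left)
  then show "adjacent v (rcomb 1 w e v)" "adjacent w (rcomb 1 w e v)"
    using assms by (auto simp: in_O_sign adjacent_def in_O2_rcomb rdet_rcomb_left rdet_swap[of v w])
qed

lemma quadrangle_adjacent:
  assumes "adjacent v w" "is_sign s"
  shows "adjacent v (rcomb 1 w (s * omega) v)" "adjacent w (rcomb omega w (- s) v)"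
    "adjacent (rcomb omega w (- s) v) (rcomb 1 w (s * omega) v)"
proof -
  have "in_O2 v" "in_O2 w" "is_sign (rdet w v)"
    using assms(1) by (simp_all add: adjacent_def)
  moreover have "rdet (rcomb omega w (- s) v) w = - s * rdet v w"
    "rdet (rcomb 1 w (s * omega) v) (rcomb omega w (- s) v) = s * rdet w v"
    by (simp_all add: rdet_rcomb_left rdet_rcomb_right rdet_swap[of v w] algebra_simps)
  ultimately show "adjacent v (rcomb 1 w (s * omega) v)" "adjacent w (rcomb omega w (- s) v)"
    "adjacent (rcomb omega w (- s) v) (rcomb 1 w (s * omega) v)"
    using assms
    by (auto simp: in_O_sign in_O_mult adjacent_def in_O2_rcomb rdet_rcomb_left rdet_swap[of v w])
qed

lemma quadrangle_height:
  assumes "adjacent v w" "is_sign s"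
  shows "real (height (rcomb omega w (- s) v))
       = real (height w) + real (height (rcomb 1 w (s * omega) v)) - real (height v)"
proof -
  have "in_O2 v" "in_O2 w" "in_O2 (rcomb omega w (- s) v)" "in_O2 (rcomb 1 w (s * omega) v)"
    using quadrangle_adjacent[OF assms] assms(1) by (simp_all add: adjacent_def)
  then show ?thesis
    using cmod_square_omega_vertex[OF assms(2), of "fst w" "fst v"]
    by (simp add: of_nat_height rcomb_def)
qed

context Wkk_elem
begin

definition consistent :: "row \<Rightarrow> row \<Rightarrow> bool" where
  "consistent v w \<longleftrightarrow> descent_sum k P v - descent_sum k P w = msym k P v w"

definition consistent_below :: "nat \<Rightarrow> bool" where
  "consistent_below N \<longleftrightarrow>
     (\<forall>v w. adjacent v w \<longrightarrow> height v < N \<longrightarrow> height w < N \<longrightarrow> consistent v w)"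

lemma consistent_belowD:
  "consistent_below N \<Longrightarrow> adjacent v w \<Longrightarrow> height v < N \<Longrightarrow> height w < N \<Longrightarrow> consistent v w"
  unfolding consistent_below_def by blast

lemma consistent_swap: "adjacent v w \<Longrightarrow> consistent v w \<Longrightarrow> consistent w v"
  unfolding consistent_def by (simp add: msym_swap_adjacent algebra_simps)

lemma consistent_descend: "unimodular v \<Longrightarrow> fst v \<noteq> 0 \<Longrightarrow> consistent v (descend v)"
  by (simp add: consistent_def descent_sum_descend)

lemma consistent_triangle:
  "msym k P a b + msym k P b c + msym k P c a = 0 \<Longrightarrow> consistent a b \<Longrightarrow> consistent b c
     \<Longrightarrow> consistent c a"
  unfolding consistent_def by (simp add: algebra_simps neg_eq_iff_add_eq_0)

lemma consistent_quadrangle: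
  "msym k P a b + msym k P b c + msym k P c d + msym k P d a = 0 \<Longrightarrow> consistent a b
     \<Longrightarrow> consistent b c \<Longrightarrow> consistent c d \<Longrightarrow> consistent d a"
  unfolding consistent_def by (simp add: algebra_simps neg_eq_iff_add_eq_0)

lemma descent_sum_rneg_below:
  assumes "consistent_below N" "height w < N"
  shows "descent_sum k P (rneg w) = descent_sum k P w"
proof (cases "unimodular w \<and> fst w \<noteq> 0")
  case True
  define d where "d = descend (rneg w)"
  have "unimodular (rneg w)" "fst (rneg w) \<noteq> 0"
    using True by simp_all
  then have "adjacent w d" "height d < height w"
    using adjacent_descend height_descend_less by (fastforce simp: d_def)+
  then have "consistent w d"
    using assms by (auto intro: consistent_belowD)
  moreover have "descent_sum k P (rneg w) = msym k P w d + descent_sum k P d"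
    using descent_sum_descend[OF \<open>unimodular (rneg w)\<close> \<open>fst (rneg w) \<noteq> 0\<close>] by (simp add: d_def)
  ultimately show ?thesis
    by (simp add: consistent_def algebra_simps)
next
  case False
  then show ?thesis
    by (auto simp: descent_sum_fst_0 descent_sum_not_unimodular)
qed

lemma consistent_shift_triangle:
  assumes "consistent_below N" "adjacent v x" "height x < N" "consistent v x"
    and "\<bar>m\<bar> \<le> 1" "height (rcomb 1 x (of_int m) v) < N"
  shows "consistent v (rcomb 1 x (of_int m) v)"
proof (cases "m = 0")
  case False
  define e :: complex where "e = of_int m"
  define y where "y = rcomb 1 x e v"
  have "m = 1 \<or> m = -1"
    using False assms(5) by auto
  then have "is_sign e"
    by (auto simp: e_def)
  have "adjacent v y" "adjacent x y"
    using triangle_adjacent[OF assms(2) \<open>is_sign e\<close>] by (simp_all add: y_def)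
  have "consistent x y"
    using assms(1,3,6) \<open>adjacent x y\<close> by (auto simp: y_def e_def intro: consistent_belowD)
  moreover have "is_sign (rdet x v)"
    using assms(2) by (simp add: adjacent_def)
  ultimately have "consistent y v"
    using consistent_triangle[OF triangle_relation[OF _ \<open>is_sign e\<close>] assms(4)] by (simp add: y_def)
  then show ?thesis
    using consistent_swap \<open>adjacent v y\<close> adjacent_commute unfolding y_def e_def by blast
qed (use assms in \<open>simp add: rcomb_def\<close>)

lemma consistent_shift_quadrangle:
  assumes "consistent_below N" "height v = N" "adjacent v x" "height x < N" "consistent v x"
    and "\<bar>n\<bar> \<le> 1" "height (rcomb 1 x (of_int n * omega) v) < N"
  shows "consistent v (rcomb 1 x (of_int n * omega) v)"
proof (cases "n = 0")
  case False
  define s :: complex where "s = of_int n"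
  define y where "y = rcomb 1 x (s * omega) v"
  define u where "u = rcomb omega x (- s) v"
  have "n = 1 \<or> n = -1"
    using False assms(6) by auto
  then have "is_sign s"
    by (auto simp: s_def)
  have "adjacent v y" "adjacent x u" "adjacent u y"
    using quadrangle_adjacent[OF assms(3) \<open>is_sign s\<close>] by (simp_all add: y_def u_def)
  have "height u < N"
    using quadrangle_height[OF assms(3) \<open>is_sign s\<close>] assms(2,4,7) by (simp add: u_def s_def)
  then have "consistent x u" "consistent u y"
    using assms(1,4,7) \<open>adjacent x u\<close> \<open>adjacent u y\<close>
    by (auto simp: y_def s_def intro: consistent_belowD)
  moreover have "is_sign (rdet x v)"
    using assms(3) by (simp add: adjacent_def)
  ultimately have "consistent y v"
    using consistent_quadrangle[OF quadrangle_relation[OF _ \<open>is_sign s\<close>] assms(5)]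
    by (simp add: y_def u_def)
  then show ?thesis
    using consistent_swap \<open>adjacent v y\<close> adjacent_commute unfolding y_def s_def by blast
qed (use assms in \<open>simp add: rcomb_def\<close>)

text \<open>By the British flag identity one of the two paths from \<open>c\<close> to \<open>c + (m + n\<omega>) v\<close> via
  \<open>c + m v\<close> or \<open>c + n\<omega> v\<close> stays below height \<open>N\<close>.\<close>
lemma consistent_shift:
  assumes "consistent_below N" "height v = N" "adjacent v c" "height c < N" "consistent v c"
    and "\<bar>m\<bar> \<le> 1" "\<bar>n\<bar> \<le> 1" "height (rcomb 1 c (of_int m + of_int n * omega) v) < N"
  shows "consistent v (rcomb 1 c (of_int m + of_int n * omega) v)"
proof -
  define t where "t = rcomb 1 c (of_int m + of_int n * omega) v"
  define x' where "x' = rcomb 1 c (of_int m) v"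
  define x'' where "x'' = rcomb 1 c (of_int n * omega) v"
  have t: "t = rcomb 1 x' (of_int n * omega) v" "t = rcomb 1 x'' (of_int m) v"
    by (simp_all add: t_def x'_def x''_def rcomb_def algebra_simps)
  have "adjacent v x'" "adjacent v x''" "adjacent v t"
    using assms(3) by (simp_all add: x'_def x''_def t_def adjacent_shift in_O_add in_O_mult)
  then have "in_O2 c" "in_O2 x'" "in_O2 x''" "in_O2 t"
    using assms(3) by (simp_all add: adjacent_def)
  have "(cmod (fst c))^2 + (cmod (fst t))^2 = (cmod (fst x'))^2 + (cmod (fst x''))^2"
    using british_flag_omega[of "fst c" "of_int m" "of_int n" "fst v"]
    by (simp add: t_def x'_def x''_def rcomb_def)
  then have "real (height c) + real (height t) = real (height x') + real (height x'')"
    using \<open>in_O2 c\<close> \<open>in_O2 t\<close> \<open>in_O2 x'\<close> \<open>in_O2 x''\<close> by (simp add: of_nat_height)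
  moreover have "real (height c) < N" "real (height t) < N"
    using assms(4,8) by (simp_all add: t_def)
  ultimately have "height x' < N \<or> height x'' < N"
    by linarith
  then show ?thesis
  proof
    assume "height x' < N"
    then have "consistent v x'"
      using consistent_shift_triangle[OF assms(1,3,4,5,6)] by (simp add: x'_def)
    then show ?thesis
      using consistent_shift_quadrangle[OF assms(1,2) \<open>adjacent v x'\<close> \<open>height x' < N\<close> _ assms(7)]
        assms(8) by (simp flip: t_def add: t(1))
  next
    assume "height x'' < N"
    then have "consistent v x''"
      using consistent_shift_quadrangle[OF assms(1,2,3,4,5,7)] by (simp add: x''_def)
    then show ?thesis
      using consistent_shift_triangle[OF assms(1) \<open>adjacent v x''\<close> \<open>height x'' < N\<close> _ assms(6)]
        assms(8) by (simp flip: t_def add: t(2))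
  qed
qed

lemma consistent_with_lower:
  assumes IH: "consistent_below N" and v: "height v = N" and "adjacent v w" "height w < N"
  shows "consistent v w"
proof -
  have "in_O2 v" "is_sign (rdet w v)"
    using \<open>adjacent v w\<close> by (simp_all add: adjacent_def)
  have "unimodular v" "fst v \<noteq> 0"
    using \<open>adjacent v w\<close> \<open>height w < N\<close> v height_eq_0_iff[OF \<open>in_O2 v\<close>]
    by (auto intro: unimodular_if_adjacent)
  define c where "c = descend v"
  have "adjacent v c" "height c < N" "consistent v c"
    using adjacent_descend[OF \<open>unimodular v\<close> \<open>fst v \<noteq> 0\<close>]
      height_descend_less[OF \<open>unimodular v\<close> \<open>fst v \<noteq> 0\<close>]
      consistent_descend[OF \<open>unimodular v\<close> \<open>fst v \<noteq> 0\<close>] v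
    by (simp_all add: c_def)
  txt \<open>Replace \<open>w\<close> by \<open>\<plusminus>w\<close> on the same side of \<open>v\<close> as \<open>c\<close>.\<close>
  define w' where "w' = (if rdet w v = rdet c v then w else rneg w)"
  have "adjacent v w'" "height w' < N" "rdet w' v = rdet c v"
    using \<open>adjacent v w\<close> \<open>height w < N\<close> \<open>adjacent v c\<close> \<open>is_sign (rdet w v)\<close>
    by (auto simp: w'_def adjacent_def)
  then obtain m n where "w' = rcomb 1 c (of_int m + of_int n * omega) v" "\<bar>m\<bar> \<le> 1" "\<bar>n\<bar> \<le> 1"
    using lower_adjacent_difference[OF \<open>adjacent v c\<close>] \<open>height c < N\<close> v by blast
  then have "consistent v w'"
    using consistent_shift[OF IH v \<open>adjacent v c\<close> \<open>height c < N\<close> \<open>consistent v c\<close>]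
      \<open>height w' < N\<close> by simp
  moreover have "descent_sum k P w' = descent_sum k P w"
    using descent_sum_rneg_below[OF IH \<open>height w < N\<close>] by (simp add: w'_def)
  ultimately show ?thesis
    by (simp add: consistent_def w'_def split: if_splits)
qed

lemma consistent_close_triangle:
  assumes "consistent_below N" "height v = N" "height w = N" "adjacent v w"
    and "is_sign e" "height (rcomb 1 w e v) < N"
  shows "consistent v w"
proof -
  define y where "y = rcomb 1 w e v"
  have "adjacent v y" "adjacent w y"
    using triangle_adjacent[OF assms(4,5)] by (simp_all add: y_def)
  then have "consistent w y" "consistent y v"
    using consistent_with_lower[OF assms(1)] assms(2,3,6) consistent_swap
    by (auto simp: y_def)
  moreover have "msym k P w y + msym k P y v + msym k P v w = 0"
    using triangle_relation[OF _ assms(5), of w v] assms(4)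
    by (simp add: y_def adjacent_def ac_simps)
  ultimately show ?thesis
    using consistent_triangle by blast
qed

lemma consistent_close_quadrangle:
  assumes "consistent_below N" "height v = N" "height w = N" "adjacent v w"
    and "is_sign s" "height (rcomb 1 w (s * omega) v) < N"
  shows "consistent v w"
proof -
  define y where "y = rcomb 1 w (s * omega) v"
  define u where "u = rcomb omega w (- s) v"
  have "adjacent v y" "adjacent w u" "adjacent u y"
    using quadrangle_adjacent[OF assms(4,5)] by (simp_all add: y_def u_def)
  have "height u < N"
    using quadrangle_height[OF assms(4,5)] assms(2,3,6) by (simp add: u_def)
  then have "consistent w u" "consistent u y" "consistent y v"
    using consistent_with_lower[OF assms(1)] consistent_belowD[OF assms(1)] consistent_swap
      \<open>adjacent v y\<close> \<open>adjacent w u\<close> \<open>adjacent u y\<close> assms(2,3,6)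
    by (auto simp: y_def)
  moreover have "msym k P w u + msym k P u y + msym k P y v + msym k P v w = 0"
    using quadrangle_relation[OF _ assms(5), of w v] assms(4)
    by (simp add: y_def u_def adjacent_def ac_simps)
  ultimately show ?thesis
    using consistent_quadrangle by blast
qed

lemma consistent_same_height:
  assumes "consistent_below N" "height v = N" "height w = N" "adjacent v w"
  shows "consistent v w"
proof -
  have "in_O2 v" "in_O2 w"
    using assms(4) by (simp_all add: adjacent_def)
  then have "cmod (fst w) = cmod (fst v)"
    using assms(2,3) height_eq_iff[OF \<open>in_O2 w\<close> \<open>in_O2 v\<close>] by simp
  have "fst v \<noteq> 0"
  proof
    assume "fst v = 0"
    then have "fst w = 0"
      using \<open>cmod (fst w) = cmod (fst v)\<close> by simp
    with \<open>fst v = 0\<close> show False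
      using assms(4) by (simp add: adjacent_def rdet_def)
  qed
  have lower: "height (rcomb 1 w e v) < N" if "cmod (fst w + e * fst v) < cmod (fst v)" "in_O e" for e
  proof -
    have "in_O2 (rcomb 1 w e v)"
      using \<open>in_O2 v\<close> \<open>in_O2 w\<close> \<open>in_O e\<close> by (simp add: in_O2_rcomb)
    then show ?thesis
      using height_less_iff[OF _ \<open>in_O2 v\<close>] that(1) by (simp add: rcomb_def flip: assms(2))
  qed
  from cmod_equal_shorten[OF \<open>cmod (fst w) = cmod (fst v)\<close> \<open>fst v \<noteq> 0\<close>] show ?thesis
  proof (elim disjE)
    assume "cmod (fst w + fst v) < cmod (fst v)"
    then show ?thesis
      using lower[of 1] consistent_close_triangle[OF assms(1-4), of 1] by simp
  next
    assume "cmod (fst w - fst v) < cmod (fst v)"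
    then show ?thesis
      using lower[of "-1"] consistent_close_triangle[OF assms(1-4), of "-1"] by simp
  next
    assume "cmod (fst w + omega * fst v) < cmod (fst v)"
    then show ?thesis
      using lower[of omega] consistent_close_quadrangle[OF assms(1-4), of 1] by simp
  next
    assume "cmod (fst w - omega * fst v) < cmod (fst v)"
    then show ?thesis
      using lower[of "- omega"] consistent_close_quadrangle[OF assms(1-4), of "-1"] by simp
  qed
qed

lemma consistent_below_all: "consistent_below N"
proof (induction N)
  case 0
  then show ?case
    by (simp add: consistent_below_def)
next
  case (Suc N)
  have "consistent v w" if adj: "adjacent v w" and "height v \<le> N" "height w \<le> N" for v w
  proof -
    consider "height v < N" "height w < N" | "height v = N" "height w < N"
      | "height v < N" "height w = N" | "height v = N" "height w = N"
      using \<open>height v \<le> N\<close> \<open>height w \<le> N\<close> by (auto simp: le_less)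
    then show ?thesis
    proof cases
      case 1
      then show ?thesis
        using consistent_belowD[OF Suc.IH adj] by blast
    next
      case 2
      then show ?thesis
        using consistent_with_lower[OF Suc.IH] adj by blast
    next
      case 3
      then show ?thesis
        using consistent_with_lower[OF Suc.IH] consistent_swap adj adjacent_commute by blast
    next
      case 4
      then show ?thesis
        using consistent_same_height[OF Suc.IH] adj by blast
    qed
  qed
  then show ?case
    by (simp add: consistent_below_def)
qed

lemma consistent_if_adjacent: "adjacent v w \<Longrightarrow> consistent v w"
  by (rule consistent_belowD[OF consistent_below_all, of _ _ "Suc (max (height v) (height w))"]) auto

lemma descent_sum_rneg: "descent_sum k P (rneg w) = descent_sum k P w"
  using descent_sum_rneg_below[OF consistent_below_all, of w "Suc (height w)"] by simp

end

section \<open>Parabolic cocycles\<close>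

lemma mneg_mneg [simp]: "mneg (mneg M) = M"
  by (cases M) simp

lemma mmul_mneg_left: "mmul (mneg M) N = mneg (mmul M N)"
  and mmul_mneg_right: "mmul M (mneg N) = mneg (mmul M N)"
  by (cases M, cases N, simp)+

lemma mdet_mmul: "mdet (mmul M N) = mdet M * mdet N"
  by (cases M, cases N) (simp add: algebra_simps)

lemma pcl_mneg [simp]: "pcl (mneg M) = pcl M"
  by (cases M) (auto simp: pcl_def)

lemma pmul_pcl [simp]: "pmul (pcl M) (pcl N) = pcl (mmul M N)"
  by (auto simp: pmul_def pcl_def mmul_mneg_left mmul_mneg_right image_iff)

lemma rep_pcl: "rep (pcl M) = M \<or> rep (pcl M) = mneg M"
proof -
  have "rep (pcl M) \<in> pcl M"
    unfolding rep_def by (rule someI[of _ M]) (simp add: pcl_def)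
  then show ?thesis
    by (simp add: pcl_def)
qed

lemma pslash_pcl [simp]: "pslash k P (pcl M) = slash k P M"
  using rep_pcl[of M] by (auto simp: pslash_def slash_mneg)

lemma mdet_SL2O: "M \<in> SL2O \<Longrightarrow> mdet M = 1"
  by (cases M) (simp add: SL2O_def)

lemma SL2O_mmul:
  assumes "M \<in> SL2O" "N \<in> SL2O" shows "mmul M N \<in> SL2O"
  using assms mdet_mmul[of M N] by (cases M, cases N) (auto simp: SL2O_def in_O_add in_O_mult)

lemma Gamma2_iff: "X \<in> Gamma2 \<longleftrightarrow> (\<exists>M\<in>SL2O. X = pcl M)"
  by (auto simp: Gamma2_def)

lemma pcl_in_Gamma2: "M \<in> SL2O \<Longrightarrow> pcl M \<in> Gamma2"
  by (auto simp: Gamma2_def)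

lemma matS_in_SL2O: "matS \<in> SL2O"
  and matT_in_SL2O: "matT \<in> SL2O"
  and matTw_in_SL2O: "matTw \<in> SL2O"
  and matTwinv_in_SL2O: "matTwinv \<in> SL2O"
  and one_in_SL2O: "(1, 0, 0, 1) \<in> SL2O"
  by (simp_all add: SL2O_def matS_def matT_def matTw_def matTwinv_def)

definition bottom_row :: "mat2 \<Rightarrow> row" where
  "bottom_row M = (case M of (a, b, c, e) \<Rightarrow> (c, e))"

lemma bottom_row_mmul: "bottom_row (mmul M N) = rmul (bottom_row M) N"
  by (cases M, cases N) (simp add: bottom_row_def rmul_def)

lemma bottom_row_mneg: "bottom_row (mneg M) = rneg (bottom_row M)"
  by (cases M) (simp add: bottom_row_def rneg_def)

lemma rmul_0_1: "rmul (0, 1) M = bottom_row M"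
  by (cases M) (simp add: rmul_def bottom_row_def)

lemma rmul_rneg: "rmul (rneg v) M = rneg (rmul v M)"
  by (cases M) (simp add: rmul_def rneg_def algebra_simps)

lemma SL2O_adjacent: "(a, b, c, e) \<in> SL2O \<Longrightarrow> adjacent (c, e) (a, b)"
  by (simp add: SL2O_def adjacent_def in_O2_def rdet_def)

lemma unimodular_bottom_row: "M \<in> SL2O \<Longrightarrow> unimodular (bottom_row M)"
  by (cases M) (auto simp: bottom_row_def intro: unimodular_if_adjacent SL2O_adjacent)

lemma adjacent_fst_0_sign:
  assumes "adjacent (0, y) w" shows "is_sign y"
proof -
  have "in_O y" "in_O (fst w)" "fst w * y = 1 \<or> fst w * y = -1"
    using assms by (auto simp: adjacent_def in_O2_def rdet_def)
  then show ?thesis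
    using in_O_unit[of y "fst w"] in_O_unit[of y "- fst w"] by (auto simp: mult.commute)
qed

lemma Vkk_add: "P \<in> Vkk k \<Longrightarrow> Q \<in> Vkk k \<Longrightarrow> P + Q \<in> Vkk k"
  by (auto simp: Vkk_def intro: degree_add_le)

lemma Vkk_smult: "P \<in> Vkk k \<Longrightarrow> smult [:c:] P \<in> Vkk k"
  using degree_smult_le[of "[:c:]" P] degree_smult_le[of c] by (auto simp: Vkk_def intro: order_trans)

lemma descent_sum_in_Vkk: "descent_sum k P v \<in> Vkk k"
proof (induction k P v rule: descent_sum.induct)
  case (1 k P v)
  show ?case
  proof (cases "unimodular v \<and> fst v \<noteq> 0")
    case True
    then show ?thesis
      using 1 by (simp add: descent_sum_descend msym_def slash_in_Vkk Vkk_add)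
  qed (auto simp: descent_sum_fst_0 descent_sum_not_unimodular Vkk_def)
qed

definition cocycle_of :: "nat \<Rightarrow> complex poly poly \<Rightarrow> mat2 set \<Rightarrow> complex poly poly" where
  "cocycle_of k P X = (if X \<in> Gamma2 then descent_sum k P (bottom_row (rep X)) else 0)"

context Wkk_elem
begin

lemma descent_sum_rmul:
  assumes "M \<in> SL2O" "unimodular v"
  shows "descent_sum k P (rmul v M) = slash k (descent_sum k P v) M + descent_sum k P (bottom_row M)"
  using assms(2)
proof (induction "height v" arbitrary: v rule: less_induct)
  case less
  show ?case
  proof (cases "fst v = 0")
    case False
    define d where "d = descend v"
    have "adjacent v d" "height d < height v"
      using adjacent_descend height_descend_less less.prems False by (simp_all add: d_def)
    then have "descent_sum k P (rmul d M) = slash k (descent_sum k P d) M + descent_sum k P (bottom_row M)"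
      using less.hyps unimodular_if_adjacent by blast
    moreover have "descent_sum k P v = msym k P v d + descent_sum k P d"
      using descent_sum_descend[OF less.prems False] by (simp add: d_def)
    moreover have "consistent (rmul v M) (rmul d M)"
      using consistent_if_adjacent adjacent_rmul \<open>adjacent v d\<close> assms(1) by blast
    moreover have "msym k P (rmul v M) (rmul d M) = slash k (msym k P v d) M"
      using assms(1) by (simp add: msym_rmul mdet_SL2O)
    ultimately show ?thesis
      by (simp add: consistent_def slash_add algebra_simps)
  next
    case True
    then obtain y where v: "v = (0, y)"
      by (cases v) auto
    then have "is_sign y"
      using less.prems adjacent_fst_0_sign by (auto simp: unimodular_def)
    then have "v = (0, 1) \<or> v = rneg (0, 1)"
      by (auto simp: v rneg_def)
    then show ?thesis
      by (elim disjE) (simp_all add: rmul_rneg descent_sum_rneg rmul_0_1 descent_sum_fst_0)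
  qed
qed

lemma cocycle_of_pcl: "M \<in> SL2O \<Longrightarrow> cocycle_of k P (pcl M) = descent_sum k P (bottom_row M)"
  using rep_pcl[of M] by (auto simp: cocycle_of_def pcl_in_Gamma2 bottom_row_mneg descent_sum_rneg)

lemma cocycle_of_in_Cp: "cocycle_of k P \<in> Cp k"
proof -
  have "cocycle_of k P (pmul X Y) = pslash k (cocycle_of k P X) Y + cocycle_of k P Y"
    if XY: "X \<in> Gamma2" "Y \<in> Gamma2" for X Y
  proof -
    obtain M N where "M \<in> SL2O" "X = pcl M" "N \<in> SL2O" "Y = pcl N"
      using XY unfolding Gamma2_iff by blast
    then show ?thesis
      using descent_sum_rmul[OF \<open>N \<in> SL2O\<close> unimodular_bottom_row[OF \<open>M \<in> SL2O\<close>]]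
      by (simp add: cocycle_of_pcl SL2O_mmul bottom_row_mmul)
  qed
  moreover have "cocycle_of k P (pcl matT) = 0" "cocycle_of k P (pcl matTw) = 0"
    using matT_in_SL2O matTw_in_SL2O
    by (simp_all add: cocycle_of_pcl matT_def matTw_def bottom_row_def descent_sum_fst_0)
  ultimately show ?thesis
    by (simp add: Cp_def cocycle_of_def descent_sum_in_Vkk)
qed

lemma cocycle_of_S: "cocycle_of k P (pcl matS) = P"
proof -
  have "consistent (1, 0) (0, 1)"
    by (rule consistent_if_adjacent) (simp add: adjacent_def in_O2_def rdet_def)
  moreover have "msym k P (1, 0) (0, 1) = P"
    using slash_id[OF in_Vkk] by (simp add: msym_def rdet_def)
  ultimately show ?thesis
    using matS_in_SL2O
    by (simp add: consistent_def cocycle_of_pcl matS_def bottom_row_def descent_sum_fst_0)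
qed

end

definition unipotent :: "complex \<Rightarrow> mat2" where
  "unipotent x = (1, x, 0, 1)"

lemma unipotent_in_SL2O: "in_O x \<Longrightarrow> unipotent x \<in> SL2O"
  by (simp add: unipotent_def SL2O_def)

lemma mmul_unipotent: "mmul (unipotent x) (unipotent y) = unipotent (x + y)"
  by (simp add: unipotent_def)

lemma SL2O_lower_left_0:
  assumes "(a, b, 0, e) \<in> SL2O"
  shows "(a, b, 0, e) = unipotent b \<or> (a, b, 0, e) = mmul (mmul matS matS) (unipotent (- b))"
proof -
  have "in_O a" "in_O e" "a * e = 1"
    using assms by (simp_all add: SL2O_def)
  then have "a = 1 \<and> e = 1 \<or> a = -1 \<and> e = -1"
    using in_O_unit[of a e] by (auto simp: minus_equation_iff)
  then show ?thesis
    by (auto simp: unipotent_def matS_def)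
qed

lemma SL2O_induct [consumes 1, case_names S unipotent mmul]:
  assumes "M \<in> SL2O" and S: "Q matS" and unipotent: "\<And>x. in_O x \<Longrightarrow> Q (unipotent x)"
    and mmul: "\<And>M N. M \<in> SL2O \<Longrightarrow> N \<in> SL2O \<Longrightarrow> Q M \<Longrightarrow> Q N \<Longrightarrow> Q (mmul M N)"
  shows "Q M"
  using assms(1)
proof (induction "height (bottom_row M)" arbitrary: M rule: less_induct)
  case less
  have SS: "Q (mmul matS matS)" "mmul matS matS \<in> SL2O"
    using mmul[OF matS_in_SL2O matS_in_SL2O S S] SL2O_mmul[OF matS_in_SL2O matS_in_SL2O] by simp_all
  obtain a b c e where M: "M = (a, b, c, e)"
    by (cases M) auto
  have O: "in_O a" "in_O b" "in_O c" "in_O e"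
    using less.prems by (auto simp: M SL2O_def)
  show ?case
  proof (cases "c = 0")
    case True
    then show ?thesis
      using SL2O_lower_left_0[of a b e] less.prems SS O(2) unipotent mmul unipotent_in_SL2O
      by (metis M in_O_uminus_iff)
  next
    case False
    obtain l where "in_O l" "cmod (a + l * c) < cmod c"
      using in_O_division[OF O(1) O(3) False] .
    define M1 where "M1 = mmul matS (mmul (unipotent l) M)"
    have "M1 \<in> SL2O"
      unfolding M1_def using \<open>in_O l\<close> less.prems
      by (intro SL2O_mmul matS_in_SL2O unipotent_in_SL2O)
    moreover have "height (bottom_row M1) < height (bottom_row M)"
      using \<open>cmod (a + l * c) < cmod c\<close> O \<open>in_O l\<close>
      by (simp add: M1_def M unipotent_def matS_def bottom_row_def height_less_iff in_O2_def
          in_O_add in_O_mult)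
    ultimately have "Q M1"
      using less.hyps by blast
    txt \<open>\<open>S\<^sup>3 = S\<^sup>-\<^sup>1\<close>, so \<open>M = T\<^bsub>-l\<^esub> S\<^sup>3 M1\<close>.\<close>
    have "M = mmul (unipotent (- l)) (mmul (mmul (mmul matS matS) matS) M1)"
      by (simp add: M1_def M unipotent_def matS_def)
    then show ?thesis
      using \<open>Q M1\<close> \<open>M1 \<in> SL2O\<close> \<open>in_O l\<close> S SS
      by (metis mmul unipotent SL2O_mmul matS_in_SL2O unipotent_in_SL2O in_O_uminus_iff)
  qed
qed

lemma Cp_pcl_mmul:
  assumes "f \<in> Cp k" "M \<in> SL2O" "N \<in> SL2O"
  shows "f (pcl (mmul M N)) = slash k (f (pcl M)) N + f (pcl N)"
proof -
  have "f (pmul (pcl M) (pcl N)) = pslash k (f (pcl M)) (pcl N) + f (pcl N)"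
    using assms pcl_in_Gamma2[of M] pcl_in_Gamma2[of N] unfolding Cp_def by blast
  then show ?thesis
    by simp
qed

lemma Cp_pcl_in_Vkk: "f \<in> Cp k \<Longrightarrow> M \<in> SL2O \<Longrightarrow> f (pcl M) \<in> Vkk k"
  using pcl_in_Gamma2 by (simp add: Cp_def)

lemma Cp_one: assumes "f \<in> Cp k" shows "f (pcl (1, 0, 0, 1)) = 0"
proof -
  have "f (pcl (1, 0, 0, 1)) = slash k (f (pcl (1, 0, 0, 1))) (1, 0, 0, 1) + f (pcl (1, 0, 0, 1))"
    using Cp_pcl_mmul[OF assms one_in_SL2O one_in_SL2O] by simp
  then show ?thesis
    using slash_id[OF Cp_pcl_in_Vkk[OF assms one_in_SL2O]] by simp
qed

lemma Cp_unipotent_add: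
  assumes "f \<in> Cp k" "in_O x" "in_O y" "f (pcl (unipotent x)) = 0" "f (pcl (unipotent y)) = 0"
  shows "f (pcl (unipotent (x + y))) = 0"
  using Cp_pcl_mmul[OF assms(1) unipotent_in_SL2O unipotent_in_SL2O, OF assms(2,3)] assms(4,5)
  by (simp add: mmul_unipotent)

lemma Cp_unipotent_uminus:
  assumes f: "f \<in> Cp k" and "in_O y" "f (pcl (unipotent y)) = 0"
  shows "f (pcl (unipotent (- y))) = 0"
proof -
  let ?Q = "f (pcl (unipotent (- y)))"
  have "slash k ?Q (unipotent y) = 0"
    using Cp_pcl_mmul[OF f unipotent_in_SL2O unipotent_in_SL2O, of "- y" y] assms(2,3) Cp_one[OF f]
    by (simp add: mmul_unipotent unipotent_def)
  moreover have "mdet (unipotent (- y)) \<noteq> 0"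
    by (simp add: unipotent_def)
  ultimately have "slash k ?Q (mmul (unipotent y) (unipotent (- y))) = 0"
    by (simp flip: slash_mmul)
  then show ?thesis
    using slash_id[OF Cp_pcl_in_Vkk[OF f unipotent_in_SL2O]] assms(2)
    by (simp add: mmul_unipotent unipotent_def)
qed

lemma Cp_unipotent_of_int_mult:
  assumes f: "f \<in> Cp k" and "in_O t" "f (pcl (unipotent t)) = 0"
  shows "f (pcl (unipotent (of_int m * t))) = 0"
proof (induction m rule: int_induct[where k = 0])
  case base
  then show ?case
    using Cp_one[OF f] by (simp add: unipotent_def)
next
  case (step1 i)
  then show ?case
    using Cp_unipotent_add[OF f _ \<open>in_O t\<close> _ assms(3), of "of_int i * t"] assms(2) in_O_mult
    by (simp add: algebra_simps)
next
  case (step2 i)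
  then show ?case
    using Cp_unipotent_add[OF f _ _ _ Cp_unipotent_uminus[OF assms], of "of_int i * t"] assms(2) in_O_mult
    by (simp add: algebra_simps)
qed

lemma Cp_unipotent:
  assumes f: "f \<in> Cp k" and "in_O x"
  shows "f (pcl (unipotent x)) = 0"
proof -
  obtain m n :: int where "x = of_int m + of_int n * omega"
    using \<open>in_O x\<close> in_O_def by auto
  moreover have "f (pcl (unipotent 1)) = 0" "f (pcl (unipotent omega)) = 0"
    using f by (simp_all add: Cp_def unipotent_def matT_def matTw_def)
  ultimately show ?thesis
    using Cp_unipotent_add[OF f] Cp_unipotent_of_int_mult[OF f, of 1 m] Cp_unipotent_of_int_mult[OF f, of omega n]
      in_O_mult by simp
qed

lemma Cp_order_2:
  assumes "f \<in> Cp k" "M \<in> SL2O" "mmul M M = mneg (1, 0, 0, 1)"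
  shows "f (pcl M) + slash k (f (pcl M)) M = 0"
proof -
  have "f (pcl (mmul M M)) = 0"
    using Cp_one[OF assms(1)] assms(3) by (metis pcl_mneg)
  then show ?thesis
    using Cp_pcl_mmul[OF assms(1,2,2)] by (simp add: add.commute)
qed

lemma Cp_order_3:
  assumes "f \<in> Cp k" "M \<in> SL2O" "mmul M (mmul M M) = mneg (1, 0, 0, 1)"
  shows "f (pcl M) + slash k (f (pcl M)) M + slash k (f (pcl M)) (mmul M M) = 0"
proof -
  have "f (pcl (mmul M (mmul M M))) = 0"
    using Cp_one[OF assms(1)] assms(3) by (metis pcl_mneg)
  moreover have "mmul M M \<in> SL2O"
    using assms(2) assms(2) by (rule SL2O_mmul)
  ultimately show ?thesis
    using Cp_pcl_mmul[OF assms(1,2) \<open>mmul M M \<in> SL2O\<close>] Cp_pcl_mmul[OF assms(1,2,2)]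
    by (simp add: algebra_simps)
qed

lemma Cp_relation_Tw:
  assumes f: "f \<in> Cp k"
  defines "P \<equiv> f (pcl matS)"
  shows "P + slash k P (mmul matS matTw) + slash k P (mmul matTw matS)
      + slash k P (mmul (mmul (mmul matTwinv matS) matTw) matS) = 0"
proof -
  define A where "A = mmul matTwinv matS"
  define B where "B = mmul A matTw"
  define Y where "Y = mmul B matS"
  have SL: "A \<in> SL2O" "B \<in> SL2O" "Y \<in> SL2O"
    unfolding A_def B_def Y_def by (intro SL2O_mmul matS_in_SL2O matTw_in_SL2O matTwinv_in_SL2O)+
  have "f (pcl matTwinv) = 0"
    using Cp_unipotent[OF f, of "- omega"] by (simp add: unipotent_def matTwinv_def)
  then have "f (pcl A) = P"
    using Cp_pcl_mmul[OF f matTwinv_in_SL2O matS_in_SL2O] by (simp add: A_def P_def)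
  then have "f (pcl B) = slash k P matTw"
    using Cp_pcl_mmul[OF f SL(1) matTw_in_SL2O] f by (simp add: B_def Cp_def)
  then have "f (pcl Y) = slash k P (mmul matTw matS) + P"
    using Cp_pcl_mmul[OF f SL(2) matS_in_SL2O] by (simp add: Y_def P_def slash_mmul matS_def)
  moreover have "mmul Y Y = mneg (1, 0, 0, 1)" "mmul (mmul matTw matS) Y = mmul matS matTw"
    by (simp_all add: Y_def B_def A_def matTwinv_def matS_def matTw_def algebra_simps)
  moreover have "mdet Y \<noteq> 0"
    using mdet_SL2O[OF SL(3)] by simp
  ultimately have "P + slash k P (mmul matS matTw) + slash k P (mmul matTw matS) + slash k P Y = 0"
    using Cp_order_2[OF f SL(3)] by (simp add: slash_add slash_mmul algebra_simps)
  then show ?thesis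
    by (simp add: Y_def B_def A_def)
qed

lemma Cp_S_in_Wkk:
  assumes f: "f \<in> Cp k"
  shows "f (pcl matS) \<in> Wkk k"
proof -
  define P where "P = f (pcl matS)"
  have "matU \<in> SL2O"
    unfolding matU_def by (intro SL2O_mmul matT_in_SL2O matS_in_SL2O)
  have "f (pcl matU) = P"
    using Cp_pcl_mmul[OF f matT_in_SL2O matS_in_SL2O] f by (simp add: matU_def P_def Cp_def)
  then have "P + slash k P matU + slash k P (mmul matU matU) = 0"
    using Cp_order_3[OF f \<open>matU \<in> SL2O\<close>] by (simp add: matU_def matT_def matS_def)
  moreover have "P + slash k P matS = 0"
    using Cp_order_2[OF f matS_in_SL2O] by (simp add: P_def matS_def)
  ultimately show ?thesis
    using Cp_relation_Tw[OF f] Cp_pcl_in_Vkk[OF f matS_in_SL2O] by (simp add: Wkk_def P_def)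
qed

lemma Cp_unique:
  assumes "f \<in> Cp k" "g \<in> Cp k" "f (pcl matS) = g (pcl matS)"
  shows "f = g"
proof
  fix X
  show "f X = g X"
  proof (cases "X \<in> Gamma2")
    case True
    then obtain M where "M \<in> SL2O" "X = pcl M"
      by (auto simp: Gamma2_iff)
    from \<open>M \<in> SL2O\<close> have "f (pcl M) = g (pcl M)"
    proof (induction rule: SL2O_induct)
      case (unipotent x)
      then show ?case
        using Cp_unipotent[OF assms(1)] Cp_unipotent[OF assms(2)] by simp
    next
      case (mmul M N)
      then show ?case
        using Cp_pcl_mmul[OF assms(1)] Cp_pcl_mmul[OF assms(2)] by simp
    qed (rule assms(3))
    then show ?thesis
      using \<open>X = pcl M\<close> by simp
  next
    case False
    then show ?thesis
      using assms(1,2) by (simp add: Cp_def)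
  qed
qed

lemma Cp_lincomb:
  assumes "f \<in> Cp k" "g \<in> Cp k"
  shows "(\<lambda>X. smult [:c:] (f X) + g X) \<in> Cp k"
  using assms
  by (simp add: Cp_def Vkk_add Vkk_smult pslash_def slash_add slash_smult smult_add_right algebra_simps)

theorem proposition5p9:
  fixes k :: nat
  assumes "odd k"
  shows "bij_betw (\<lambda>f. f (pcl matS)) (Cp k) (Wkk k)
    \<and> (\<forall>f\<in>Cp k. \<forall>g\<in>Cp k. \<forall>c::complex.
          (\<lambda>X. smult [:c:] (f X) + g X) \<in> Cp k
          \<and> (\<lambda>X. smult [:c:] (f X) + g X) (pcl matS) = smult [:c:] (f (pcl matS)) + g (pcl matS))"
proof (intro conjI ballI allI)
  have "P \<in> (\<lambda>f. f (pcl matS)) ` Cp k" if "P \<in> Wkk k" for P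
  proof -
    interpret Wkk_elem k P
      using that by unfold_locales
    show ?thesis
      using cocycle_of_in_Cp cocycle_of_S by (metis image_eqI)
  qed
  then have "(\<lambda>f. f (pcl matS)) ` Cp k = Wkk k"
    using Cp_S_in_Wkk by blast
  moreover have "inj_on (\<lambda>f. f (pcl matS)) (Cp k)"
    using Cp_unique by (auto intro: inj_onI)
  ultimately show "bij_betw (\<lambda>f. f (pcl matS)) (Cp k) (Wkk k)"
    by (simp add: bij_betw_def)
qed (simp_all add: Cp_lincomb)

end
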